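(* Let $\varepsilon>0$, $k_1,k_2\in(0,\infty)$, $\alpha=\frac{k_1-1}{k_1+1}$, $\beta=\frac{k_2-1}{k_2+1}$, and let $\mathcal{G}(x,y)$ be defined as below. Then: (i) for $y\in\mathcal{B}_0$: $x\mapsto\mathcal{G}(x,y)$ is harmonic in $\mathcal{B}_1\cup\mathcal{B}_2$ and $x\mapsto\mathcal{G}(x,y)-\log|x-y|$ is harmonic in $\mathcal{B}_0$; (ii) for $y\in\mathcal{B}_1$: $x\mapsto\mathcal{G}(x,y)$ is harmonic in $\mathcal{B}_0\cup\mathcal{B}_2$ and $x\mapsto\mathcal{G}(x,y)-\frac1{k_1}\log|x-y|$ is harmonic in $\mathcal{B}_1\setminus\{(1+\varepsilon/2,0)\}$; (iii) for $y\in\mathcal{B}_2$: $x\mapsto\mathcal{G}(x,y)$ is harmonic in $\mathcal{B}_0\cup\mathcal{B}_1$ and $x\mapsto\mathcal{G}(x,y)-\frac1{k_2}\log|x-y|$ is harmonic in $\mathcal{B}_2\setminus\{(-1-\varepsilon/2,0)\}$. Moreover, in each case, $\mathcal{G}(\cdot,y)$ and $a(x)\partial_\nu\mathcal{G}(\cdot,y)$ are continuous across $\partial\mathcal{B}_1\cup\partial\mathcal{B}_2$, i.e. their one-sided limits from $\mathcal{B}_0$ and from $\mathcal{B}_j$ agree on $\partial\mathcal{B}_j$, $j=1,2$, where $\nu$ is the unit normal to $\partial(\mathcal{B}_1\cup\mathcal{B}_2)$ and $a=k_1\chi_{\mathcal{B}_1}+k_2\chi_{\mathcal{B}_2}+\chi_{\mathcal{B}_0}$.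 (In the paper's normalization $\Delta_x\log|x-y|=\delta(x-y)$, this says $a(x)\Delta_x\mathcal{G}(x,y)=\delta(x-y)$ away from the interfaces and the excluded points, together with the transmission conditions.)
   Context: $\mathcal{B}_1=B_1(1+\varepsilon/2,0)$, $\mathcal{B}_2=B_1(-1-\varepsilon/2,0)$, $\mathcal{B}_0=\mathbb{R}^2\setminus\overline{\mathcal{B}_1\cup\mathcal{B}_2}$. $\Phi_1,\Phi_2$ are the inversions in the circles $\partial\mathcal{B}_1,\partial\mathcal{B}_2$: identifying $x$ with $z=x_1+ix_2$ and setting $a_0=1+\varepsilon/2$, $\Phi_1(z)=\frac{1}{\bar z-a_0}+a_0$, $\Phi_2(z)=\frac{1}{\bar z+a_0}-a_0$. Compositions are written by juxtaposition, e.g. $(\Phi_1\Phi_2)^l=(\Phi_1\circ\Phi_2)^{\circ l}$, with the $0$-th power the identity. Write $L(p)=\log|p-y|$. The function $\mathcal{G}$ is defined by: (1) For $y\in\mathcal{B}_0$: for $x\in\overline{\mathcal{B}}_1$, $\mathcal{G}=\frac{2}{k_1+1}\sum_{l\ge0}(\alpha\beta)^l\big(L((\Phi_1\Phi_2)^l x)-\beta L((\Phi_2\Phi_1)^l\Phi_2x)\big)$; for $x\in\mathcal{B}_0$, $\mathcal{G}=L(x)+\sum_{l\ge1}\big[(\alpha\beta)^l\big(L((\Phi_1\Phi_2)^lx)+L((\Phi_2\Phi_1)^lx)\big)-(\alpha\beta)^{l-1}\big(\beta L((\Phi_2\Phi_1)^{l-1}\Phi_2x)+\alpha L((\Phi_1\Phi_2)^{l-1}\Phi_1x)\big)\big]$;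 for $x\in\overline{\mathcal{B}}_2$, $\mathcal{G}=\frac{2}{k_2+1}\sum_{l\ge0}(\alpha\beta)^l\big(L((\Phi_2\Phi_1)^lx)-\alpha L((\Phi_1\Phi_2)^l\Phi_1x)\big)$. (2) For $y\in\mathcal{B}_1$: for $x\in\overline{\mathcal{B}}_1\setminus\{(1+\varepsilon/2,0)\}$, $\mathcal{G}=\frac1{k_1}\big(L(x)+\alpha L(\Phi_1x)\big)-\frac{4\beta}{(k_1+1)^2}\sum_{l\ge0}(\alpha\beta)^lL((\Phi_2\Phi_1)^l\Phi_2x)$; for $x\in\mathcal{B}_0$, $\mathcal{G}=\frac{2}{k_1+1}\sum_{l\ge0}(\alpha\beta)^l\big(L((\Phi_2\Phi_1)^lx)-\beta L((\Phi_2\Phi_1)^l\Phi_2x)\big)$; for $x\in\overline{\mathcal{B}}_2$, $\mathcal{G}=\frac{4}{(k_1+1)(k_2+1)}\sum_{l\ge0}(\alpha\beta)^lL((\Phi_2\Phi_1)^lx)$. (3) For $y\in\mathcal{B}_2$: for $x\in\overline{\mathcal{B}}_1$, $\mathcal{G}=\frac{4}{(k_1+1)(k_2+1)}\sum_{l\ge0}(\alpha\beta)^lL((\Phi_1\Phi_2)^lx)$; for $x\in\mathcal{B}_0$, $\mathcal{G}=\frac{2}{k_2+1}\sum_{l\ge0}(\alpha\beta)^l\big(L((\Phi_1\Phi_2)^lx)-\alpha L((\Phi_1\Phi_2)^l\Phi_1x)\big)$; for $x\in\overline{\mathcal{B}}_2\setminus\{(-1-\varepsilon/2,0)\}$, $\mathcal{G}=\frac1{k_2}\big(L(x)+\beta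 L(\Phi_2x)\big)-\frac{4\alpha}{(k_2+1)^2}\sum_{l\ge0}(\alpha\beta)^lL((\Phi_1\Phi_2)^l\Phi_1x)$. *)

theory Defs
  imports "HOL-Analysis.Analysis"
begin

text \<open>The plane R^2 is identified with the complex numbers, x = x1 + i x2.\<close>

definition a0 :: "real \<Rightarrow> real" where
  "a0 \<epsilon> = 1 + \<epsilon> / 2"

definition cen1 :: "real \<Rightarrow> complex" where
  "cen1 \<epsilon> = complex_of_real (a0 \<epsilon>)"

definition cen2 :: "real \<Rightarrow> complex" where
  "cen2 \<epsilon> = - complex_of_real (a0 \<epsilon>)"

definition Bone :: "real \<Rightarrow> complex set" where
  "Bone \<epsilon> = ball (cen1 \<epsilon>) 1"

definition Btwo :: "real \<Rightarrow> complex set" where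
  "Btwo \<epsilon> = ball (cen2 \<epsilon>) 1"

definition Bzero :: "real \<Rightarrow> complex set" where
  "Bzero \<epsilon> = UNIV - (closure (Bone \<epsilon>) \<union> closure (Btwo \<epsilon>))"

definition Phi1 :: "real \<Rightarrow> complex \<Rightarrow> complex" where
  "Phi1 \<epsilon> z = 1 / (cnj z - complex_of_real (a0 \<epsilon>)) + complex_of_real (a0 \<epsilon>)"

definition Phi2 :: "real \<Rightarrow> complex \<Rightarrow> complex" where
  "Phi2 \<epsilon> z = 1 / (cnj z + complex_of_real (a0 \<epsilon>)) - complex_of_real (a0 \<epsilon>)"

definition contrast :: "real \<Rightarrow> real" where
  "contrast k = (k - 1) / (k + 1)"

definition Lg :: "complex \<Rightarrow> complex \<Rightarrow> real" where
  "Lg y p = ln (cmod (p - y))"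

definition Gfun :: "real \<Rightarrow> real \<Rightarrow> real \<Rightarrow> complex \<Rightarrow> complex \<Rightarrow> real" where
  "Gfun \<epsilon> k1 k2 x y =
    (let \<alpha> = contrast k1; \<beta> = contrast k2;
         P12 = (\<lambda>l. (Phi1 \<epsilon> \<circ> Phi2 \<epsilon>) ^^ l);
         P21 = (\<lambda>l. (Phi2 \<epsilon> \<circ> Phi1 \<epsilon>) ^^ l);
         L = Lg y
     in
     if y \<in> Bzero \<epsilon> then
       (if x \<in> closure (Bone \<epsilon>) then
          2 / (k1 + 1) * (\<Sum>l. (\<alpha> * \<beta>) ^ l *
              (L (P12 l x) - \<beta> * L (P21 l (Phi2 \<epsilon> x))))
        else if x \<in> Bzero \<epsilon> then
          L x + (\<Sum>m. let l = Suc m in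
              (\<alpha> * \<beta>) ^ l * (L (P12 l x) + L (P21 l x))
              - (\<alpha> * \<beta>) ^ (l - 1) * (\<beta> * L (P21 (l - 1) (Phi2 \<epsilon> x))
                                       + \<alpha> * L (P12 (l - 1) (Phi1 \<epsilon> x))))
        else if x \<in> closure (Btwo \<epsilon>) then
          2 / (k2 + 1) * (\<Sum>l. (\<alpha> * \<beta>) ^ l *
              (L (P21 l x) - \<alpha> * L (P12 l (Phi1 \<epsilon> x))))
        else 0)
     else if y \<in> Bone \<epsilon> then
       (if x \<in> closure (Bone \<epsilon>) then
          1 / k1 * (L x + \<alpha> * L (Phi1 \<epsilon> x))
          - 4 * \<beta> / (k1 + 1)^2 * (\<Sum>l. (\<alpha> * \<beta>) ^ l * L (P21 l (Phi2 \<epsilon> x)))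
        else if x \<in> Bzero \<epsilon> then
          2 / (k1 + 1) * (\<Sum>l. (\<alpha> * \<beta>) ^ l *
              (L (P21 l x) - \<beta> * L (P21 l (Phi2 \<epsilon> x))))
        else if x \<in> closure (Btwo \<epsilon>) then
          4 / ((k1 + 1) * (k2 + 1)) * (\<Sum>l. (\<alpha> * \<beta>) ^ l * L (P21 l x))
        else 0)
     else if y \<in> Btwo \<epsilon> then
       (if x \<in> closure (Bone \<epsilon>) then
          4 / ((k1 + 1) * (k2 + 1)) * (\<Sum>l. (\<alpha> * \<beta>) ^ l * L (P12 l x))
        else if x \<in> Bzero \<epsilon> then
          2 / (k2 + 1) * (\<Sum>l. (\<alpha> * \<beta>) ^ l *
              (L (P12 l x) - \<alpha> * L (P12 l (Phi1 \<epsilon> x))))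
        else if x \<in> closure (Btwo \<epsilon>) then
          1 / k2 * (L x + \<beta> * L (Phi2 \<epsilon> x))
          - 4 * \<alpha> / (k2 + 1)^2 * (\<Sum>l. (\<alpha> * \<beta>) ^ l * L (P12 l (Phi1 \<epsilon> x)))
        else 0)
     else 0)"

definition pd :: "complex \<Rightarrow> (complex \<Rightarrow> real) \<Rightarrow> complex \<Rightarrow> real" where
  "pd v f z = deriv (\<lambda>t. f (z + complex_of_real t * v)) 0"

definition harmonic_on :: "complex set \<Rightarrow> (complex \<Rightarrow> real) \<Rightarrow> bool" where
  "harmonic_on U f \<longleftrightarrow> open U \<and>
    (\<forall>v\<in>{1, \<i>}. \<forall>z\<in>U.
        ((\<lambda>t. f (z + complex_of_real t * v)) has_real_derivative pd v f z) (at 0)) \<and>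
    (\<forall>v\<in>{1, \<i>}. \<forall>w\<in>{1, \<i>}. \<forall>z\<in>U.
        ((\<lambda>t. pd w f (z + complex_of_real t * v)) has_real_derivative pd v (pd w f) z) (at 0)) \<and>
    (\<forall>v\<in>{1, \<i>}. \<forall>w\<in>{1, \<i>}. continuous_on U (pd v (pd w f))) \<and>
    (\<forall>z\<in>U. pd 1 (pd 1 f) z + pd \<i> (pd \<i> f) z = 0)"

definition acoef :: "real \<Rightarrow> real \<Rightarrow> real \<Rightarrow> complex \<Rightarrow> real" where
  "acoef \<epsilon> k1 k2 x = (if x \<in> Bone \<epsilon> then k1 else if x \<in> Btwo \<epsilon> then k2 else 1)"

definition transmission :: "real \<Rightarrow> real \<Rightarrow> real \<Rightarrow> complex \<Rightarrow> complex \<Rightarrow> (complex \<Rightarrow> real) \<Rightarrow> bool" where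
  "transmission \<epsilon> k1 k2 c x0 f \<longleftrightarrow>
    (\<exists>l. (f \<longlongrightarrow> l) (at x0 within Bzero \<epsilon>) \<and> (f \<longlongrightarrow> l) (at x0 within ball c 1)) \<and>
    (\<exists>l. ((\<lambda>x. acoef \<epsilon> k1 k2 x * pd (sgn (x - c)) f x) \<longlongrightarrow> l) (at x0 within Bzero \<epsilon>) \<and>
         ((\<lambda>x. acoef \<epsilon> k1 k2 x * pd (sgn (x - c)) f x) \<longlongrightarrow> l) (at x0 within ball c 1))"

end

theory Submission
  imports Defs "HOL-Complex_Analysis.Complex_Analysis"
begin

(*
  Write Phi1 = cnj o psi1 and Phi2 = cnj o psi2, where psi_j z = 1 / (z - c_j) + c_j is holomorphic;
  the centres are real, so Phi1 Phi2 = psi1 psi2 and Phi2 Phi1 = psi2 psi1 are holomorphic maps of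
  the exterior of one disk into the other disk.  Every term of every series defining G is therefore
  log |g - y'| with g holomorphic, i.e. a function whose gradient is the conjugate of a holomorphic
  function.  The iterates stay in a disk at positive distance from the source and |alpha beta| < 1,
  so by Cauchy's estimate the series of these gradients converge locally uniformly: each piece of G
  is harmonic.  On the circle bounding B1 the reflection Phi1 is the identity and reverses the normal
  derivative, so each reflected series takes the value of its partner and the negated normal
  derivative; continuity of G and of a dG/dnu then reduce to identities such as
  1 - alpha = 2 / (k1 + 1) and 1 + alpha = 2 k1 / (k1 + 1).  The statements about B2 follow
  from those about B1 through the symmetry G_{k1,k2}(x, y) = G_{k2,k1}(-x, -y).
*)

section \<open>Functions with a holomorphic gradient\<close>

lemma has_real_derivative_along_path:
  assumes f: "(f has_derivative f') (at z)"
    and r: "(r has_real_derivative r') (at 0)" and r0: "r 0 = 0"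
  shows "((\<lambda>t. f (z + complex_of_real (r t) * v)) has_real_derivative r' * f' v) (at 0)"
proof -
  have lin: "linear f'" using f by (rule has_derivative_linear)
  have "((\<lambda>s. z + complex_of_real s * v) has_derivative (\<lambda>s. complex_of_real s * v)) (at 0)"
    by (auto intro!: derivative_eq_intros)
  moreover have "(f has_derivative f') (at (z + complex_of_real 0 * v))"
    using f by simp
  ultimately have "((\<lambda>s. f (z + complex_of_real s * v)) has_derivative (\<lambda>s. f' (complex_of_real s * v))) (at 0)"
    by (rule has_derivative_compose)
  moreover have "f' (complex_of_real s * v) = f' v * s" for s
    using linear.scaleR[OF lin, of s v] by (simp add: scaleR_conv_of_real mult.commute)
  ultimately have "((\<lambda>s. f (z + complex_of_real s * v)) has_real_derivative f' v) (at (r 0))"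
    unfolding has_field_derivative_def r0 by (simp add: fun_eq_iff)
  from DERIV_chain[OF this r] show ?thesis by (simp add: o_def mult.commute)
qed

lemma pd_eq:
  assumes "(f has_derivative f') (at z)"
  shows "pd v f z = f' v"
  using has_real_derivative_along_path[OF assms DERIV_ident, of v]
  unfolding pd_def by (auto intro: DERIV_imp_deriv)

lemma pd_add:
  assumes "f differentiable at z" "g differentiable at z"
  shows "pd v (\<lambda>x. f x + g x) z = pd v f z + pd v g z"
proof -
  obtain f' g' where f: "(f has_derivative f') (at z)" and g: "(g has_derivative g') (at z)"
    using assms by (auto simp: differentiable_def)
  show ?thesis by (simp add: pd_eq[OF has_derivative_add[OF f g]] pd_eq[OF f] pd_eq[OF g])
qed

lemma pd_diff:
  assumes "f differentiable at z" "g differentiable at z"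
  shows "pd v (\<lambda>x. f x - g x) z = pd v f z - pd v g z"
proof -
  obtain f' g' where f: "(f has_derivative f') (at z)" and g: "(g has_derivative g') (at z)"
    using assms by (auto simp: differentiable_def)
  show ?thesis by (simp add: pd_eq[OF has_derivative_diff[OF f g]] pd_eq[OF f] pd_eq[OF g])
qed

lemma pd_cmult:
  assumes "f differentiable at z"
  shows "pd v (\<lambda>x. c * f x) z = c * pd v f z"
proof -
  obtain f' where f: "(f has_derivative f') (at z)"
    using assms by (auto simp: differentiable_def)
  show ?thesis by (simp add: pd_eq[OF has_derivative_mult_right[OF f]] pd_eq[OF f])
qed

lemmas differentiable_rules = differentiable_add differentiable_diff differentiable_mult differentiable_const

lemma pd_uminus: "pd v (\<lambda>x. f (- x)) z = pd (- v) f (- z)"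
  unfolding pd_def by (simp add: algebra_simps)

lemma eventually_line_in_open:
  assumes "open V" "x \<in> V"
  shows "\<forall>\<^sub>F t in nhds (0::real). x + complex_of_real t * v \<in> V"
proof -
  have "((\<lambda>t. x + complex_of_real t * v) \<longlongrightarrow> x + complex_of_real 0 * v) (at (0::real))"
    by (intro tendsto_intros)
  then have "((\<lambda>t. x + complex_of_real t * v) \<longlongrightarrow> x + complex_of_real 0 * v) (nhds (0::real))"
    by (rule tendsto_at_iff_tendsto_nhds[THEN iffD1])
  then show ?thesis using assms by (auto simp: tendsto_def)
qed

lemma pd_cong_open:
  assumes "open V" "x \<in> V" "\<And>z. z \<in> V \<Longrightarrow> f z = g z"
  shows "pd v f x = pd v g x"
  unfolding pd_def
proof (rule deriv_cong_ev[OF _ refl])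
  show "\<forall>\<^sub>F t in nhds 0. f (x + complex_of_real t * v) = g (x + complex_of_real t * v)"
    using eventually_line_in_open[OF assms(1,2), of v] by eventually_elim (use assms(3) in auto)
qed

text \<open>Here f is locally the real part of a primitive of H, i.e. H is the conjugate of the gradient of f.\<close>

definition has_holo_grad :: "complex set \<Rightarrow> (complex \<Rightarrow> real) \<Rightarrow> (complex \<Rightarrow> complex) \<Rightarrow> bool" where
  "has_holo_grad U f H \<longleftrightarrow>
     open U \<and> H holomorphic_on U \<and> (\<forall>z\<in>U. (f has_derivative (\<lambda>h. Re (H z * h))) (at z))"

definition holo_grad_on :: "complex set \<Rightarrow> (complex \<Rightarrow> real) \<Rightarrow> bool" where
  "holo_grad_on U f \<longleftrightarrow> (\<exists>H. has_holo_grad U f H)"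

lemma has_holo_grad_pd: "has_holo_grad U f H \<Longrightarrow> z \<in> U \<Longrightarrow> pd v f z = Re (H z * v)"
  unfolding has_holo_grad_def by (auto intro: pd_eq)

lemma has_real_derivative_pd_along_line:
  assumes f: "has_holo_grad U f H" and z: "z \<in> U"
  shows "((\<lambda>t. pd w f (z + complex_of_real t * v)) has_real_derivative Re (deriv H z * v * w)) (at 0)"
proof -
  have U: "open U" and hol: "H holomorphic_on U" using f by (auto simp: has_holo_grad_def)
  have "(H has_field_derivative deriv H z) (at z)"
    using hol U z holomorphic_derivI by blast
  then have "((\<lambda>x. Re (H x * w)) has_derivative (\<lambda>h. Re (deriv H z * h * w))) (at z)"
    unfolding has_field_derivative_def
    by (intro bounded_linear.has_derivative[OF bounded_linear_Re] has_derivative_mult_left)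
  from has_real_derivative_along_path[OF this DERIV_ident refl, of v]
  have "((\<lambda>t. Re (H (z + complex_of_real t * v) * w)) has_real_derivative Re (deriv H z * v * w)) (at 0)"
    by simp
  moreover have ev: "\<forall>\<^sub>F t in nhds 0. pd w f (z + complex_of_real t * v) = Re (H (z + complex_of_real t * v) * w)"
    using eventually_line_in_open[OF U z, of v] by eventually_elim (simp add: has_holo_grad_pd[OF f])
  ultimately show ?thesis by (subst DERIV_cong_ev[OF refl ev refl])
qed

lemma has_holo_grad_imp_harmonic_on:
  assumes f: "has_holo_grad U f H"
  shows "harmonic_on U f"
proof -
  have U: "open U" and hol: "H holomorphic_on U"
    and df: "\<And>z. z \<in> U \<Longrightarrow> (f has_derivative (\<lambda>h. Re (H z * h))) (at z)"
    using f by (auto simp: has_holo_grad_def)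
  note D2 = has_real_derivative_pd_along_line[OF f]
  have pd2: "pd v (pd w f) z = Re (deriv H z * v * w)" if "z \<in> U" for z v w
    using DERIV_imp_deriv[OF D2[OF that]] by (simp only: pd_def[of v "pd w f" z])
  show ?thesis
    unfolding harmonic_on_def
  proof (intro conjI ballI)
    show "open U" by (fact U)
    show "((\<lambda>t. f (z + complex_of_real t * v)) has_real_derivative pd v f z) (at 0)" if "z \<in> U" for v z
      using has_real_derivative_along_path[OF df[OF that] DERIV_ident refl, of v]
      by (simp add: has_holo_grad_pd[OF f that])
    show "((\<lambda>t. pd w f (z + complex_of_real t * v)) has_real_derivative pd v (pd w f) z) (at 0)"
      if "z \<in> U" for v w z
      using D2[OF that] by (simp add: pd2[OF that])
    show "continuous_on U (pd v (pd w f))" for v w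
    proof -
      have "continuous_on U (\<lambda>z. Re (deriv H z * v * w))"
        using holomorphic_on_imp_continuous_on[OF holomorphic_deriv[OF hol U]]
        by (intro continuous_intros) auto
      then show ?thesis by (rule continuous_on_cong[THEN iffD1, rotated 2]) (auto simp: pd2)
    qed
    show "pd 1 (pd 1 f) z + pd \<i> (pd \<i> f) z = 0" if "z \<in> U" for z
      by (simp add: pd2[OF that])
  qed
qed

lemma harmonic_on_Un:
  assumes "harmonic_on U f" "harmonic_on V f"
  shows "harmonic_on (U \<union> V) f"
  using assms unfolding harmonic_on_def by (auto intro!: continuous_on_open_Un)

lemma has_holo_grad_cong:
  assumes "has_holo_grad U f H" "\<And>x. x \<in> U \<Longrightarrow> f x = g x"
  shows "has_holo_grad U g H"
  using assms unfolding has_holo_grad_def by (auto intro: has_derivative_transform_within_open)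

lemma has_holo_grad_add:
  "has_holo_grad U f H \<Longrightarrow> has_holo_grad U g K \<Longrightarrow> has_holo_grad U (\<lambda>x. f x + g x) (\<lambda>z. H z + K z)"
  unfolding has_holo_grad_def
  by (auto intro!: holomorphic_intros has_derivative_eq_rhs[OF has_derivative_add] simp: algebra_simps)

lemma has_holo_grad_diff:
  "has_holo_grad U f H \<Longrightarrow> has_holo_grad U g K \<Longrightarrow> has_holo_grad U (\<lambda>x. f x - g x) (\<lambda>z. H z - K z)"
  unfolding has_holo_grad_def
  by (auto intro!: holomorphic_intros has_derivative_eq_rhs[OF has_derivative_diff] simp: algebra_simps)

lemma has_holo_grad_cmult:
  "has_holo_grad U f H \<Longrightarrow> has_holo_grad U (\<lambda>x. c * f x) (\<lambda>z. complex_of_real c * H z)"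
  unfolding has_holo_grad_def
  by (auto intro!: holomorphic_intros has_derivative_eq_rhs[OF has_derivative_mult_right] simp: algebra_simps)

lemma has_holo_grad_uminus:
  assumes "has_holo_grad U f H"
  shows "has_holo_grad (uminus ` U) (\<lambda>x. f (- x)) (\<lambda>z. - H (- z))"
  unfolding has_holo_grad_def
proof (intro conjI ballI)
  have U: "open U" "H holomorphic_on U" "\<And>z. z \<in> U \<Longrightarrow> (f has_derivative (\<lambda>h. Re (H z * h))) (at z)"
    using assms by (auto simp: has_holo_grad_def)
  show "open (uminus ` U)" using U(1) by (rule open_negations)
  have "(H \<circ> uminus) holomorphic_on uminus ` U"
    by (rule holomorphic_on_compose_gen[of uminus "uminus ` U" H U]) (auto intro!: holomorphic_intros U(2))
  then show "(\<lambda>z. - H (- z)) holomorphic_on uminus ` U"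
    by (auto simp: o_def intro!: holomorphic_intros)
  show "((\<lambda>x. f (- x)) has_derivative (\<lambda>h. Re (- H (- z) * h))) (at z)" if "z \<in> uminus ` U" for z
  proof -
    have "(f has_derivative (\<lambda>h. Re (H (- z) * h))) (at (- z))"
      using U(3) that by auto
    from has_derivative_compose[OF has_derivative_minus[OF has_derivative_ident] this]
    show ?thesis by simp
  qed
qed

lemma inner_sgn_eq_Re_divide:
  fixes a h b :: complex
  assumes "b \<noteq> 0"
  shows "(1 / norm b) * ((a * h) \<bullet> sgn b) = Re (a / b * h)"
proof -
  have "a / b * h = (a * h) * cnj b / complex_of_real ((norm b)\<^sup>2)"
    by (simp add: complex_div_cnj[of "a * h" b] mult_ac)
  then have "Re (a / b * h) = Re ((a * h) * cnj b) / (norm b)\<^sup>2"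
    by (simp only: Re_divide_of_real)
  moreover have "(a * h) \<bullet> sgn b = Re ((a * h) * cnj b) / norm b"
    by (simp add: sgn_div_norm inner_complex_def divide_inverse algebra_simps)
  ultimately show ?thesis using assms by (simp add: power2_eq_square)
qed

lemma has_derivative_ln_cmod:
  assumes "(g has_field_derivative g') (at z)" "g z \<noteq> 0"
  shows "((\<lambda>x. ln (cmod (g x))) has_derivative (\<lambda>h. Re (g' / g z * h))) (at z)"
proof -
  have "(g has_derivative (\<lambda>h. g' * h)) (at z)"
    using assms(1) by (simp add: has_field_derivative_def)
  from has_derivative_compose[OF this has_derivative_norm[OF assms(2)]]
  have norm_d: "((\<lambda>x. norm (g x)) has_derivative (\<lambda>h. (g' * h) \<bullet> sgn (g z))) (at z)" .
  have ln_d: "(ln has_derivative (\<lambda>h. (1 / norm (g z)) * h)) (at (norm (g z)))"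
    using DERIV_ln[of "norm (g z)"] assms(2) by (simp add: has_field_derivative_def divide_inverse)
  have "((\<lambda>x. ln (norm (g x))) has_derivative (\<lambda>h. (1 / norm (g z)) * ((g' * h) \<bullet> sgn (g z)))) (at z)"
    using has_derivative_compose[OF norm_d ln_d] by simp
  then show ?thesis using inner_sgn_eq_Re_divide[OF assms(2)] by simp
qed

lemma has_holo_grad_ln_cmod:
  assumes "open U" "g holomorphic_on U" "\<And>z. z \<in> U \<Longrightarrow> g z \<noteq> 0"
  shows "has_holo_grad U (\<lambda>x. ln (cmod (g x))) (\<lambda>z. deriv g z / g z)"
  unfolding has_holo_grad_def
proof (intro conjI ballI)
  show "(\<lambda>z. deriv g z / g z) holomorphic_on U"
    using assms by (auto intro!: holomorphic_intros)
  show "((\<lambda>x. ln (cmod (g x))) has_derivative (\<lambda>h. Re (deriv g z / g z * h))) (at z)" if "z \<in> U" for z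
    using assms that by (intro has_derivative_ln_cmod) (auto intro: holomorphic_derivI)
qed fact

lemma eventually_norm_Re_mult_le:
  fixes f :: "nat \<Rightarrow> 'a \<Rightarrow> complex"
  assumes "uniform_limit S f g F" "0 < e"
  shows "\<forall>\<^sub>F n in F. \<forall>x\<in>S. \<forall>h. norm (Re (f n x * h) - Re (g x * h)) \<le> e * norm h"
  using uniform_limitD[OF assms]
proof eventually_elim
  case (elim n)
  show ?case
  proof (intro ballI allI)
    fix x h assume "x \<in> S"
    then have "norm (f n x - g x) \<le> e" using elim by (simp add: dist_norm less_imp_le)
    then have "norm ((f n x - g x) * h) \<le> e * norm h" by (simp add: norm_mult mult_right_mono)
    moreover have "norm (Re (f n x * h) - Re (g x * h)) \<le> norm ((f n x - g x) * h)"
      using abs_Re_le_cmod[of "(f n x - g x) * h"] by (simp add: left_diff_distrib)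
    ultimately show "norm (Re (f n x * h) - Re (g x * h)) \<le> e * norm h" by linarith
  qed
qed

lemma has_derivative_Re_suminf:
  fixes \<phi> :: "nat \<Rightarrow> complex \<Rightarrow> real" and K :: "nat \<Rightarrow> complex \<Rightarrow> complex"
  assumes d: "0 < d"
    and grad: "\<And>n x. x \<in> ball z d \<Longrightarrow> (\<phi> n has_derivative (\<lambda>h. Re (K n x * h))) (at x)"
    and summ: "summable (\<lambda>n. \<phi> n z)"
    and ul: "uniform_limit (cball z d) (\<lambda>n x. \<Sum>i<n. K i x) (\<lambda>x. \<Sum>n. K n x) sequentially"
  shows "((\<lambda>x. \<Sum>n. \<phi> n x) has_derivative (\<lambda>h. Re ((\<Sum>n. K n z) * h))) (at z)"
proof -
  have zb: "z \<in> ball z d" using d by simp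
  have "\<exists>g. \<forall>x\<in>ball z d. (\<lambda>n. \<phi> n x) sums g x \<and>
          (g has_derivative (\<lambda>h. Re ((\<Sum>n. K n x) * h))) (at x within ball z d)"
  proof (rule has_derivative_series[where f'="\<lambda>n x h. Re (K n x * h)"])
    show "(\<phi> n has_derivative (\<lambda>h. Re (K n x * h))) (at x within ball z d)" if "x \<in> ball z d" for n x
      using grad[OF that] by (rule has_derivative_at_withinI)
    show "\<forall>\<^sub>F n in sequentially. \<forall>x\<in>ball z d. \<forall>h.
            norm ((\<Sum>i<n. Re (K i x * h)) - Re ((\<Sum>n. K n x) * h)) \<le> e * norm h" if "e > 0" for e
      using eventually_norm_Re_mult_le[OF uniform_limit_on_subset[OF ul ball_subset_cball] that]
      by (simp add: sum_distrib_right)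
    show "(\<lambda>n. \<phi> n z) sums (\<Sum>n. \<phi> n z)" using summ by (simp add: summable_sums)
  qed (use zb in simp_all)
  then obtain g where g: "\<forall>x\<in>ball z d. (\<lambda>n. \<phi> n x) sums g x \<and>
      (g has_derivative (\<lambda>h. Re ((\<Sum>n. K n x) * h))) (at x within ball z d)"
    by (rule exE)
  have "(g has_derivative (\<lambda>h. Re ((\<Sum>n. K n z) * h))) (at z)"
    using conjunct2[OF g[rule_format, OF zb]] by (simp only: at_within_open[OF zb open_ball])
  then show ?thesis
  proof (rule has_derivative_transform_within_open[of _ _ _ _ "ball z d"])
    show "g x = (\<Sum>n. \<phi> n x)" if "x \<in> ball z d" for x
      using conjunct1[OF g[rule_format, OF that]] by (simp add: sums_iff)
  qed (use zb in simp_all)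
qed

lemma has_holo_grad_suminf:
  fixes \<phi> :: "nat \<Rightarrow> complex \<Rightarrow> real" and K :: "nat \<Rightarrow> complex \<Rightarrow> complex"
  assumes U: "open U" and grad: "\<And>n. has_holo_grad U (\<phi> n) (K n)"
    and summ: "\<And>z. z \<in> U \<Longrightarrow> summable (\<lambda>n. \<phi> n z)"
    and loc: "\<And>z. z \<in> U \<Longrightarrow> \<exists>d>0. cball z d \<subseteq> U \<and> (\<exists>M. summable M \<and> (\<forall>n. \<forall>w\<in>cball z d. norm (K n w) \<le> M n))"
  shows "has_holo_grad U (\<lambda>z. \<Sum>n. \<phi> n z) (\<lambda>z. \<Sum>n. K n z)"
  unfolding has_holo_grad_def
proof (intro conjI ballI)
  have ul: "uniform_limit (cball z d) (\<lambda>n x. \<Sum>i<n. K i x) (\<lambda>x. \<Sum>n. K n x) sequentially"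
    if "summable M" "\<forall>n. \<forall>w\<in>cball z d. norm (K n w) \<le> M n" for z d M
    using that by (intro Weierstrass_m_test) auto
  show "(\<lambda>z. \<Sum>n. K n z) holomorphic_on U"
  proof (rule holomorphic_uniform_sequence[OF U])
    show "(\<lambda>x. \<Sum>i<n. K i x) holomorphic_on U" for n
      using grad by (intro holomorphic_on_sum) (auto simp: has_holo_grad_def)
    show "\<exists>d>0. cball x d \<subseteq> U \<and> uniform_limit (cball x d) (\<lambda>n x. \<Sum>i<n. K i x) (\<lambda>x. \<Sum>n. K n x) sequentially"
      if "x \<in> U" for x
      using loc[OF that] ul by blast
  qed
  fix z assume z: "z \<in> U"
  obtain d M where d: "d > 0" "cball z d \<subseteq> U"
    and M: "summable M" "\<forall>n. \<forall>w\<in>cball z d. norm (K n w) \<le> M n"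
    using loc[OF z] by blast
  show "((\<lambda>z. \<Sum>n. \<phi> n z) has_derivative (\<lambda>h. Re ((\<Sum>n. K n z) * h))) (at z)"
  proof (rule has_derivative_Re_suminf[where \<phi> = \<phi> and K = K, OF d(1) _ summ[OF z] ul[OF M]])
    fix n x assume "x \<in> ball z d"
    then have "x \<in> U" using d(2) by auto
    then show "(\<phi> n has_derivative (\<lambda>h. Re (K n x * h))) (at x)"
      using grad[of n] unfolding has_holo_grad_def by blast
  qed
qed fact

lemma holo_grad_on_add: "holo_grad_on U f \<Longrightarrow> holo_grad_on U g \<Longrightarrow> holo_grad_on U (\<lambda>x. f x + g x)"
  unfolding holo_grad_on_def using has_holo_grad_add by blast

lemma holo_grad_on_diff: "holo_grad_on U f \<Longrightarrow> holo_grad_on U g \<Longrightarrow> holo_grad_on U (\<lambda>x. f x - g x)"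
  unfolding holo_grad_on_def using has_holo_grad_diff by blast

lemma holo_grad_on_cmult: "holo_grad_on U f \<Longrightarrow> holo_grad_on U (\<lambda>x. c * f x)"
  unfolding holo_grad_on_def using has_holo_grad_cmult by blast

lemma holo_grad_on_cong: "holo_grad_on U f \<Longrightarrow> (\<And>x. x \<in> U \<Longrightarrow> f x = g x) \<Longrightarrow> holo_grad_on U g"
  unfolding holo_grad_on_def using has_holo_grad_cong by blast

lemma holo_grad_on_uminus: "holo_grad_on U f \<Longrightarrow> holo_grad_on (uminus ` U) (\<lambda>x. f (- x))"
  unfolding holo_grad_on_def using has_holo_grad_uminus by blast

lemma holo_grad_on_imp_harmonic_on: "holo_grad_on U f \<Longrightarrow> harmonic_on U f"
  unfolding holo_grad_on_def using has_holo_grad_imp_harmonic_on by blast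

lemma holo_grad_on_imp_differentiable: "holo_grad_on U f \<Longrightarrow> z \<in> U \<Longrightarrow> f differentiable at z"
  unfolding holo_grad_on_def has_holo_grad_def differentiable_def by blast

section \<open>Power series of functions with a holomorphic gradient\<close>

definition pow_series :: "real \<Rightarrow> (nat \<Rightarrow> complex \<Rightarrow> real) \<Rightarrow> complex \<Rightarrow> real" where
  "pow_series q \<phi> x = (\<Sum>l. q ^ l * \<phi> l x)"

definition holo_grad_series :: "complex set \<Rightarrow> real \<Rightarrow> (nat \<Rightarrow> complex \<Rightarrow> real) \<Rightarrow> bool" where
  "holo_grad_series U q \<phi> \<longleftrightarrow> (\<exists>K. (\<forall>l. has_holo_grad U (\<phi> l) (K l)) \<and>
     (\<forall>x\<in>U. summable (\<lambda>l. q ^ l * \<phi> l x)) \<and>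
     (\<forall>x\<in>U. summable (\<lambda>l. complex_of_real (q ^ l) * K l x)) \<and>
     has_holo_grad U (pow_series q \<phi>) (\<lambda>x. \<Sum>l. complex_of_real (q ^ l) * K l x))"

lemma holo_grad_series_cong:
  assumes "holo_grad_series U q \<phi>" "\<And>l x. x \<in> U \<Longrightarrow> \<phi> l x = \<psi> l x"
  shows "holo_grad_series U q \<psi>"
proof -
  obtain K where K: "\<forall>l. has_holo_grad U (\<phi> l) (K l)" "\<forall>x\<in>U. summable (\<lambda>l. q ^ l * \<phi> l x)"
      "\<forall>x\<in>U. summable (\<lambda>l. complex_of_real (q ^ l) * K l x)"
      "has_holo_grad U (pow_series q \<phi>) (\<lambda>x. \<Sum>l. complex_of_real (q ^ l) * K l x)"
    using assms(1) unfolding holo_grad_series_def by blast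
  show ?thesis unfolding holo_grad_series_def
  proof (intro exI conjI allI ballI)
    show "has_holo_grad U (\<psi> l) (K l)" for l
      using has_holo_grad_cong[OF K(1)[rule_format, of l]] assms(2) by blast
    show "summable (\<lambda>l. q ^ l * \<psi> l x)" if "x \<in> U" for x using K(2) that assms(2) by simp
    show "summable (\<lambda>l. complex_of_real (q ^ l) * K l x)" if "x \<in> U" for x using K(3) that by simp
    show "has_holo_grad U (pow_series q \<psi>) (\<lambda>x. \<Sum>l. complex_of_real (q ^ l) * K l x)"
      using has_holo_grad_cong[OF K(4)] assms(2) by (simp add: pow_series_def)
  qed
qed

lemma holo_grad_series_summable: "holo_grad_series U q \<phi> \<Longrightarrow> x \<in> U \<Longrightarrow> summable (\<lambda>l. q ^ l * \<phi> l x)"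
  unfolding holo_grad_series_def by blast

lemma holo_grad_series_term: "holo_grad_series U q \<phi> \<Longrightarrow> holo_grad_on U (\<phi> l)"
  unfolding holo_grad_series_def holo_grad_on_def by blast

lemma holo_grad_on_pow_series: "holo_grad_series U q \<phi> \<Longrightarrow> holo_grad_on U (pow_series q \<phi>)"
  unfolding holo_grad_series_def holo_grad_on_def by blast

lemma differentiable_pow_series: "holo_grad_series U q \<phi> \<Longrightarrow> x \<in> U \<Longrightarrow> pow_series q \<phi> differentiable at x"
  by (rule holo_grad_on_imp_differentiable[OF holo_grad_on_pow_series])

lemma pd_pow_series:
  assumes "holo_grad_series U q \<phi>" "x \<in> U"
  shows "(\<lambda>l. q ^ l * pd v (\<phi> l) x) sums pd v (pow_series q \<phi>) x"
proof -
  obtain K where K: "\<forall>l. has_holo_grad U (\<phi> l) (K l)"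
      "summable (\<lambda>l. complex_of_real (q ^ l) * K l x)"
      "has_holo_grad U (pow_series q \<phi>) (\<lambda>x. \<Sum>l. complex_of_real (q ^ l) * K l x)"
    using assms unfolding holo_grad_series_def by blast
  have "(\<lambda>l. complex_of_real (q ^ l) * K l x * v) sums ((\<Sum>l. complex_of_real (q ^ l) * K l x) * v)"
    using K(2) by (intro sums_mult2 summable_sums)
  then have "(\<lambda>l. Re (complex_of_real (q ^ l) * K l x * v)) sums Re ((\<Sum>l. complex_of_real (q ^ l) * K l x) * v)"
    by (rule sums_Re)
  moreover have "pd v (\<phi> l) x = Re (K l x * v)" for l
    using has_holo_grad_pd K(1) assms(2) by blast
  ultimately show ?thesis
    using has_holo_grad_pd[OF K(3) assms(2)] by (simp add: mult.assoc)
qed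

lemma summable_pow_Suc:
  fixes q :: real
  assumes "summable (\<lambda>l. q ^ l * \<phi> (Suc l) x)"
  shows "summable (\<lambda>l. q ^ l * \<phi> l x)"
proof -
  have "summable (\<lambda>l. q ^ Suc l * \<phi> (Suc l) x)"
    using summable_mult[OF assms, of q] by (simp add: mult.assoc)
  then show ?thesis by (subst summable_Suc_iff[symmetric])
qed

lemma pow_series_split_head:
  fixes q :: real
  assumes "summable (\<lambda>l. q ^ l * \<phi> (Suc l) x)"
  shows "pow_series q \<phi> x = \<phi> 0 x + q * pow_series q (\<lambda>l. \<phi> (Suc l)) x"
proof -
  have "summable (\<lambda>l. q ^ Suc l * \<phi> (Suc l) x)"
    using summable_mult[OF assms, of q] by (simp add: mult.assoc)
  then have "summable (\<lambda>l. q ^ l * \<phi> l x)" by (subst summable_Suc_iff[symmetric])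
  from suminf_split_head[OF this] suminf_mult[OF assms, of q]
  show ?thesis by (simp add: pow_series_def mult.assoc)
qed

lemma suminf_pow_diff:
  fixes q c :: real
  assumes "summable (\<lambda>l. q ^ l * a l)" "summable (\<lambda>l. q ^ l * b l)"
  shows "(\<Sum>l. q ^ l * (a l - c * b l)) = (\<Sum>l. q ^ l * a l) - c * (\<Sum>l. q ^ l * b l)"
proof -
  have "(\<lambda>l. q ^ l * a l - c * (q ^ l * b l)) sums ((\<Sum>l. q ^ l * a l) - c * (\<Sum>l. q ^ l * b l))"
    using assms by (intro sums_diff sums_mult summable_sums)
  then show ?thesis by (simp add: right_diff_distrib mult.left_commute sums_iff)
qed

lemma suminf_pow_combination:
  fixes q \<alpha> \<beta> :: real
  assumes "summable (\<lambda>m. q ^ m * a m)" "summable (\<lambda>m. q ^ m * b m)"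
    and "summable (\<lambda>m. q ^ m * c m)" "summable (\<lambda>m. q ^ m * d m)"
  shows "(\<Sum>m. q ^ Suc m * (a m + b m) - q ^ m * (\<beta> * c m + \<alpha> * d m))
       = q * (\<Sum>m. q ^ m * a m) + q * (\<Sum>m. q ^ m * b m) - \<beta> * (\<Sum>m. q ^ m * c m) - \<alpha> * (\<Sum>m. q ^ m * d m)"
proof -
  have "(\<lambda>m. (q * (q ^ m * a m) + q * (q ^ m * b m)) - (\<beta> * (q ^ m * c m) + \<alpha> * (q ^ m * d m))) sums
      ((q * (\<Sum>m. q ^ m * a m) + q * (\<Sum>m. q ^ m * b m)) - (\<beta> * (\<Sum>m. q ^ m * c m) + \<alpha> * (\<Sum>m. q ^ m * d m)))"
    using assms by (intro sums_diff sums_add sums_mult summable_sums)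
  then show ?thesis by (simp add: sums_iff algebra_simps)
qed

lemma norm_log_deriv_le:
  assumes hol: "g holomorphic_on N" and sub: "cball w d \<subseteq> N" and d: "0 < d" and \<delta>: "0 < \<delta>"
    and gw: "\<delta> \<le> cmod (g w)" and R: "\<And>x. x \<in> N \<Longrightarrow> cmod (g x) \<le> R"
  shows "cmod (deriv g w / g w) \<le> R / d / \<delta>"
proof -
  have "cmod ((deriv ^^ 1) g w) \<le> fact 1 * R / d ^ 1"
  proof (rule Cauchy_inequality)
    show "g holomorphic_on ball w d"
      using hol sub ball_subset_cball holomorphic_on_subset by blast
    show "continuous_on (cball w d) g"
      using hol sub holomorphic_on_imp_continuous_on holomorphic_on_subset by blast
    show "cmod (g x) \<le> R" if "cmod (w - x) = d" for x
      using R sub that by (auto simp: dist_norm)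
  qed (use d in auto)
  then have "cmod (deriv g w) \<le> R / d" by simp
  then show ?thesis
    unfolding norm_divide using gw \<delta> d by (meson frac_le norm_ge_zero order_trans)
qed

lemma log_deriv_locally_bounded:
  fixes g :: "nat \<Rightarrow> complex \<Rightarrow> complex"
  assumes N: "open N" and hol: "\<And>l. g l holomorphic_on N" and nz: "\<And>l x. x \<in> N \<Longrightarrow> g l x \<noteq> 0"
    and \<delta>: "0 < \<delta>" and bd: "\<And>l x. 1 \<le> l \<Longrightarrow> x \<in> N \<Longrightarrow> \<delta> \<le> cmod (g l x) \<and> cmod (g l x) \<le> R"
    and z: "z \<in> N"
  shows "\<exists>d>0. cball z d \<subseteq> N \<and> (\<exists>B. \<forall>l. \<forall>w\<in>cball z d. cmod (deriv (g l) w / g l w) \<le> B)"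
proof -
  obtain r where r: "0 < r" "cball z r \<subseteq> N" using N z open_contains_cball by blast
  define d where "d = r / 2"
  have d: "0 < d" "cball z d \<subseteq> N" using r by (auto simp: d_def)
  have "(\<lambda>w. deriv (g 0) w / g 0 w) holomorphic_on N"
    using hol nz N by (auto intro!: holomorphic_intros)
  then have "continuous_on (cball z d) (\<lambda>w. deriv (g 0) w / g 0 w)"
    using d by (meson holomorphic_on_imp_continuous_on holomorphic_on_subset)
  then have "bounded ((\<lambda>w. deriv (g 0) w / g 0 w) ` cball z d)"
    by (intro compact_imp_bounded compact_continuous_image) auto
  then obtain B0 where B0: "\<And>w. w \<in> cball z d \<Longrightarrow> cmod (deriv (g 0) w / g 0 w) \<le> B0"
    unfolding bounded_iff by blast
  have "cmod (deriv (g l) w / g l w) \<le> max B0 (R / d / \<delta>)" if w: "w \<in> cball z d" for l w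
  proof (cases "l = 0")
    case True then show ?thesis using B0[OF w] by simp
  next
    case False
    have "cball w d \<subseteq> cball z r"
    proof
      fix u assume "u \<in> cball w d"
      then have "dist z u \<le> dist z w + dist w u" "dist w u \<le> d" "dist z w \<le> d"
        using w dist_triangle by auto
      then show "u \<in> cball z r" by (simp add: d_def)
    qed
    then have sub: "cball w d \<subseteq> N" using r(2) by blast
    have "\<delta> \<le> cmod (g l w)" "\<And>x. x \<in> N \<Longrightarrow> cmod (g l x) \<le> R"
      using bd False w d(2) by auto
    from norm_log_deriv_le[OF hol sub d(1) \<delta> this] show ?thesis by simp
  qed
  then show ?thesis using d by blast
qed

lemma summable_pow_ln_bounded:
  fixes q \<delta> R :: real
  assumes q: "\<bar>q\<bar> < 1" and \<delta>: "0 < \<delta>" and bd: "\<And>l. 1 \<le> l \<Longrightarrow> \<delta> \<le> a l \<and> a l \<le> R"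
  shows "summable (\<lambda>l. q ^ l * ln (a l))"
proof (rule summable_comparison_test'[of "\<lambda>l. \<bar>q\<bar> ^ l * (\<bar>ln \<delta>\<bar> + \<bar>ln R\<bar>)" 1])
  show "summable (\<lambda>l. \<bar>q\<bar> ^ l * (\<bar>ln \<delta>\<bar> + \<bar>ln R\<bar>))"
    using q by (intro summable_mult2 summable_geometric) simp
  fix l :: nat assume "1 \<le> l"
  then have "\<delta> \<le> a l" "a l \<le> R" using bd by auto
  moreover have "0 < a l" "0 < R" using calculation \<delta> by linarith+
  ultimately have "ln \<delta> \<le> ln (a l)" "ln (a l) \<le> ln R" using \<delta> by simp_all
  then have "\<bar>ln (a l)\<bar> \<le> \<bar>ln \<delta>\<bar> + \<bar>ln R\<bar>" by linarith
  then show "norm (q ^ l * ln (a l)) \<le> \<bar>q\<bar> ^ l * (\<bar>ln \<delta>\<bar> + \<bar>ln R\<bar>)"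
    by (auto simp: abs_mult power_abs intro!: mult_left_mono)
qed

lemma summable_if_locally_dominated:
  fixes K :: "nat \<Rightarrow> 'a::real_normed_vector \<Rightarrow> 'b::banach"
  assumes "\<exists>d>0. cball z d \<subseteq> U \<and> (\<exists>M. summable M \<and> (\<forall>n. \<forall>w\<in>cball z d. norm (K n w) \<le> M n))"
  shows "summable (\<lambda>n. K n z)"
proof -
  obtain d M where d: "0 < d" and M: "summable M" "\<forall>n. \<forall>w\<in>cball z d. norm (K n w) \<le> M n"
    using assms by (elim exE conjE) (rule that)
  have "norm (norm (K n z)) \<le> M n" for n
    using M(2) d by simp
  then have "summable (\<lambda>n. norm (K n z))"
    by (rule summable_comparison_test'[OF M(1), of 0])
  then show ?thesis by (rule summable_norm_cancel)
qed

lemma holo_grad_series_ln_cmod: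
  assumes N: "open N" and hol: "\<And>l. g l holomorphic_on N" and nz: "\<And>l x. x \<in> N \<Longrightarrow> g l x \<noteq> 0"
    and q: "\<bar>q\<bar> < 1" and \<delta>: "0 < \<delta>"
    and bd: "\<And>l x. 1 \<le> l \<Longrightarrow> x \<in> N \<Longrightarrow> \<delta> \<le> cmod (g l x) \<and> cmod (g l x) \<le> R"
  shows "holo_grad_series N q (\<lambda>l x. ln (cmod (g l x)))"
proof -
  define K where "K l x = complex_of_real (q ^ l) * (deriv (g l) x / g l x)" for l x
  have grad: "has_holo_grad N (\<lambda>x. ln (cmod (g l x))) (\<lambda>x. deriv (g l) x / g l x)" for l
    using has_holo_grad_ln_cmod[OF N hol nz] .
  have geom: "summable (\<lambda>l. \<bar>q\<bar> ^ l * C)" for C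
    using q by (intro summable_mult2 summable_geometric) simp
  have summ: "summable (\<lambda>l. q ^ l * ln (cmod (g l x)))" if "x \<in> N" for x
    using bd that by (intro summable_pow_ln_bounded[OF q \<delta>]) auto
  have loc: "\<exists>d>0. cball z d \<subseteq> N \<and> (\<exists>M. summable M \<and> (\<forall>l. \<forall>w\<in>cball z d. cmod (K l w) \<le> M l))"
    if z: "z \<in> N" for z
  proof -
    have "\<exists>d>0. cball z d \<subseteq> N \<and> (\<exists>B. \<forall>l. \<forall>w\<in>cball z d. cmod (deriv (g l) w / g l w) \<le> B)"
      by (rule log_deriv_locally_bounded[OF N, where R = R]) (use hol nz \<delta> bd z in auto)
    then obtain d B where d: "0 < d" "cball z d \<subseteq> N"
      and B: "\<And>l w. w \<in> cball z d \<Longrightarrow> cmod (deriv (g l) w / g l w) \<le> B"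
      by blast
    have "cmod (K l w) \<le> \<bar>q\<bar> ^ l * B" if "w \<in> cball z d" for l w
    proof -
      have "cmod (K l w) = \<bar>q\<bar> ^ l * cmod (deriv (g l) w / g l w)"
        by (simp only: K_def norm_mult norm_of_real power_abs)
      then show ?thesis using B[OF that] by (simp add: mult_left_mono)
    qed
    then show ?thesis using d geom by blast
  qed
  have "has_holo_grad N (\<lambda>x. q ^ l * ln (cmod (g l x))) (K l)" for l
    unfolding K_def[abs_def] by (rule has_holo_grad_cmult[OF grad])
  from has_holo_grad_suminf[OF N this summ loc]
  have grad_sum: "has_holo_grad N (pow_series q (\<lambda>l x. ln (cmod (g l x)))) (\<lambda>x. \<Sum>l. K l x)"
    unfolding pow_series_def .
  have "summable (\<lambda>l. K l x)" if "x \<in> N" for x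
    using loc[OF that] by (rule summable_if_locally_dominated)
  then show ?thesis
    unfolding holo_grad_series_def using grad summ grad_sum
    by (intro exI[of _ "\<lambda>l x. deriv (g l) x / g l x"]) (auto simp: K_def)
qed

lemma funpow_mem: "f ` A \<subseteq> A \<Longrightarrow> z \<in> A \<Longrightarrow> (f ^^ n) z \<in> A"
  by (induction n) auto

lemma holomorphic_on_funpow:
  assumes "f holomorphic_on A" "f ` A \<subseteq> A"
  shows "(f ^^ n) holomorphic_on A"
proof (induction n)
  case (Suc n)
  have "(f \<circ> (f ^^ n)) holomorphic_on A"
    using funpow_mem[OF assms(2)] by (intro holomorphic_on_compose_gen[OF Suc assms(1)]) auto
  then show ?case by (simp add: o_def)
qed (simp add: id_def holomorphic_on_ident)

lemma holo_grad_series_funpow: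
  assumes Om: "open Om" "T holomorphic_on Om" "T ` Om \<subseteq> D" "D \<subseteq> Om"
    and D: "0 < \<delta>" "\<And>p. p \<in> D \<Longrightarrow> \<delta> \<le> cmod (p - y) \<and> cmod (p - y) \<le> R"
    and U: "open U" "S holomorphic_on U" "S ` U \<subseteq> Om" "\<And>x. x \<in> U \<Longrightarrow> S x \<noteq> y"
    and q: "\<bar>q\<bar> < 1"
  shows "holo_grad_series U q (\<lambda>l x. Lg y ((T ^^ l) (S x)))"
  unfolding Lg_def
proof (rule holo_grad_series_ln_cmod[OF U(1) _ _ q D(1)])
  have TOm: "T ` Om \<subseteq> Om" using Om by blast
  have iter_D: "(T ^^ l) (S x) \<in> D" if l: "1 \<le> l" and x: "x \<in> U" for l x
  proof -
    obtain m where "l = Suc m" using l by (cases l) auto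
    moreover have "(T ^^ m) (S x) \<in> Om" using funpow_mem[OF TOm] U(3) x by blast
    ultimately show ?thesis using Om(3) by auto
  qed
  show "(\<lambda>x. (T ^^ l) (S x) - y) holomorphic_on U" for l
    using holomorphic_on_compose_gen[OF U(2) holomorphic_on_funpow[OF Om(2) TOm] U(3)]
    by (auto simp: o_def intro!: holomorphic_intros)
  show "(T ^^ l) (S x) - y \<noteq> 0" if x: "x \<in> U" for l x
  proof (cases "l = 0")
    case False
    then have "\<delta> \<le> cmod ((T ^^ l) (S x) - y)" using D(2) iter_D[OF _ x, of l] by simp
    then show ?thesis using D(1) by auto
  qed (use U(4)[OF x] in simp)
  show "\<delta> \<le> cmod ((T ^^ l) (S x) - y) \<and> cmod ((T ^^ l) (S x) - y) \<le> R" if "1 \<le> l" "x \<in> U" for l x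
    using D(2) iter_D[OF that] by blast
qed

section \<open>The two disks and the inversions\<close>

lemma cen2_eq: "cen2 \<epsilon> = - cen1 \<epsilon>"
  by (simp add: cen1_def cen2_def)

lemma cnj_cen1 [simp]: "cnj (cen1 \<epsilon>) = cen1 \<epsilon>" and cnj_cen2 [simp]: "cnj (cen2 \<epsilon>) = cen2 \<epsilon>"
  by (simp_all add: cen1_def cen2_def)

lemma dist_cmod: "dist c z = cmod (z - c)"
  by (simp add: dist_norm norm_minus_commute)

lemma norm_cnj_sub_real: "cnj c = c \<Longrightarrow> cmod (cnj y - c) = cmod (y - c)"
  by (metis complex_cnj_diff complex_mod_cnj)

lemma closure_Bone: "closure (Bone \<epsilon>) = cball (cen1 \<epsilon>) 1"
  and closure_Btwo: "closure (Btwo \<epsilon>) = cball (cen2 \<epsilon>) 1"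
  by (simp_all add: Bone_def Btwo_def)

lemma mem_Bzero: "z \<in> Bzero \<epsilon> \<longleftrightarrow> 1 < cmod (z - cen1 \<epsilon>) \<and> 1 < cmod (z - cen2 \<epsilon>)"
  by (auto simp: Bzero_def closure_Bone closure_Btwo dist_cmod)

lemma open_Bzero: "open (Bzero \<epsilon>)"
  unfolding Bzero_def by (auto intro!: open_Diff)

lemma open_Bone: "open (Bone \<epsilon>)" and open_Btwo: "open (Btwo \<epsilon>)"
  by (simp_all add: Bone_def Btwo_def)

lemma cball_cen1_sep:
  assumes "0 < \<epsilon>" "cmod (z - cen1 \<epsilon>) \<le> 1"
  shows "1 < cmod (z - cen2 \<epsilon>)"
proof -
  have "cen1 \<epsilon> - cen2 \<epsilon> = complex_of_real (2 + \<epsilon>)"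
    by (simp add: cen1_def cen2_def a0_def)
  then have "cmod (cen1 \<epsilon> - cen2 \<epsilon>) = \<bar>2 + \<epsilon>\<bar>"
    by (simp only: norm_of_real)
  then have "2 + \<epsilon> = cmod (cen1 \<epsilon> - cen2 \<epsilon>)"
    using assms(1) by simp
  also have "\<dots> \<le> cmod (z - cen2 \<epsilon>) + cmod (z - cen1 \<epsilon>)"
    using norm_triangle_ineq4[of "z - cen2 \<epsilon>" "z - cen1 \<epsilon>"] by simp
  finally show ?thesis using assms by linarith
qed

lemma cball_cen2_sep:
  assumes "0 < \<epsilon>" "cmod (z - cen2 \<epsilon>) \<le> 1"
  shows "1 < cmod (z - cen1 \<epsilon>)"
  using assms cball_cen1_sep[of \<epsilon> z] by force

lemma cball_cen1_subset: "0 < \<epsilon> \<Longrightarrow> cball (cen1 \<epsilon>) 1 \<subseteq> - cball (cen2 \<epsilon>) 1"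
  and cball_cen2_subset: "0 < \<epsilon> \<Longrightarrow> cball (cen2 \<epsilon>) 1 \<subseteq> - cball (cen1 \<epsilon>) 1"
  using cball_cen1_sep cball_cen2_sep by (fastforce simp: dist_cmod)+

lemma ball_dist_bounds:
  assumes "p \<in> ball c 1" "1 < cmod (y - c)"
  shows "cmod (y - c) - 1 \<le> cmod (p - y) \<and> cmod (p - y) \<le> cmod (y - c) + 1"
proof -
  have "cmod (y - c) \<le> cmod (p - y) + cmod (p - c)"
    using norm_triangle_ineq4[of "p - c" "p - y"] by (simp add: norm_minus_commute)
  moreover have "cmod (p - y) \<le> cmod (p - c) + cmod (y - c)"
    using norm_triangle_ineq4[of "p - c" "y - c"] by simp
  moreover have "cmod (p - c) < 1" using assms(1) by (simp add: dist_cmod)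
  ultimately show ?thesis using assms(2) by linarith
qed

lemma regions_disjoint:
  assumes "0 < \<epsilon>"
  shows "x \<in> closure (Bone \<epsilon>) \<Longrightarrow> x \<notin> closure (Btwo \<epsilon>)"
    and "x \<in> closure (Btwo \<epsilon>) \<Longrightarrow> x \<notin> closure (Bone \<epsilon>)"
    and "x \<in> closure (Bone \<epsilon>) \<Longrightarrow> x \<notin> Bzero \<epsilon>"
    and "x \<in> closure (Btwo \<epsilon>) \<Longrightarrow> x \<notin> Bzero \<epsilon>"
    and "x \<in> Bzero \<epsilon> \<Longrightarrow> x \<notin> closure (Bone \<epsilon>)"
    and "x \<in> Bzero \<epsilon> \<Longrightarrow> x \<notin> closure (Btwo \<epsilon>)"
    and "x \<in> Bone \<epsilon> \<Longrightarrow> x \<in> closure (Bone \<epsilon>)"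
    and "x \<in> Btwo \<epsilon> \<Longrightarrow> x \<in> closure (Btwo \<epsilon>)"
    and "x \<in> Bone \<epsilon> \<Longrightarrow> x \<notin> Btwo \<epsilon>"
    and "x \<in> Btwo \<epsilon> \<Longrightarrow> x \<notin> Bone \<epsilon>"
    and "x \<in> Bone \<epsilon> \<Longrightarrow> x \<notin> Bzero \<epsilon>"
    and "x \<in> Btwo \<epsilon> \<Longrightarrow> x \<notin> Bzero \<epsilon>"
proof -
  have sep: "x \<in> closure (Bone \<epsilon>) \<Longrightarrow> x \<notin> closure (Btwo \<epsilon>)"
    using cball_cen1_sep[OF assms, of x] by (auto simp: closure_Bone closure_Btwo dist_cmod)
  then show "x \<in> closure (Bone \<epsilon>) \<Longrightarrow> x \<notin> closure (Btwo \<epsilon>)"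
    and "x \<in> closure (Btwo \<epsilon>) \<Longrightarrow> x \<notin> closure (Bone \<epsilon>)" by blast+
  show in_closure: "x \<in> Bone \<epsilon> \<Longrightarrow> x \<in> closure (Bone \<epsilon>)" "x \<in> Btwo \<epsilon> \<Longrightarrow> x \<in> closure (Btwo \<epsilon>)"
    using closure_subset by blast+
  show "x \<in> Bone \<epsilon> \<Longrightarrow> x \<notin> Btwo \<epsilon>" "x \<in> Btwo \<epsilon> \<Longrightarrow> x \<notin> Bone \<epsilon>"
    using sep in_closure by blast+
qed (auto simp: Bzero_def dest: closure_subset[THEN subsetD])

lemma Bone_subset_compl_cball: "0 < \<epsilon> \<Longrightarrow> Bone \<epsilon> \<subseteq> - cball (cen2 \<epsilon>) 1"
  unfolding Bone_def using ball_subset_cball cball_cen1_subset by blast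

lemma Bzero_subset_compl_cball: "Bzero \<epsilon> \<subseteq> - cball (cen1 \<epsilon>) 1" "Bzero \<epsilon> \<subseteq> - cball (cen2 \<epsilon>) 1"
  by (auto simp: mem_Bzero dist_cmod)

lemma Btwo_outside_cball_cen1: "0 < \<epsilon> \<Longrightarrow> y \<in> Btwo \<epsilon> \<Longrightarrow> 1 < cmod (y - cen1 \<epsilon>)"
  and Bone_outside_cball_cen2: "0 < \<epsilon> \<Longrightarrow> y \<in> Bone \<epsilon> \<Longrightarrow> 1 < cmod (y - cen2 \<epsilon>)"
  by (auto simp: Bone_def Btwo_def dist_cmod intro: cball_cen1_sep cball_cen2_sep)

lemma mem_uminus_image: "x \<in> uminus ` A \<longleftrightarrow> - x \<in> (A :: complex set)"
  by (metis image_eqI minus_minus imageE)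

lemma dist_uminus_right: "dist c (- x) = dist (- c) (x :: complex)"
  by (metis dist_minus minus_minus)

lemma uminus_in_Bone_iff: "- x \<in> Bone \<epsilon> \<longleftrightarrow> x \<in> Btwo \<epsilon>"
  and uminus_in_Btwo_iff: "- x \<in> Btwo \<epsilon> \<longleftrightarrow> x \<in> Bone \<epsilon>"
  and uminus_in_closure_Bone_iff: "- x \<in> closure (Bone \<epsilon>) \<longleftrightarrow> x \<in> closure (Btwo \<epsilon>)"
  and uminus_in_closure_Btwo_iff: "- x \<in> closure (Btwo \<epsilon>) \<longleftrightarrow> x \<in> closure (Bone \<epsilon>)"
  and uminus_in_Bzero_iff: "- x \<in> Bzero \<epsilon> \<longleftrightarrow> x \<in> Bzero \<epsilon>"
  by (auto simp: Bzero_def Bone_def Btwo_def cen2_eq dist_uminus_right)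

lemma uminus_image_Bone: "uminus ` Bone \<epsilon> = Btwo \<epsilon>"
  and uminus_image_Btwo: "uminus ` Btwo \<epsilon> = Bone \<epsilon>"
  and uminus_image_Bzero: "uminus ` Bzero \<epsilon> = Bzero \<epsilon>"
  and uminus_image_Bone_punctured: "uminus ` (Bone \<epsilon> - {cen1 \<epsilon>}) = Btwo \<epsilon> - {cen2 \<epsilon>}"
  by (auto simp: mem_uminus_image uminus_in_Bone_iff uminus_in_Btwo_iff uminus_in_Bzero_iff cen2_eq
      minus_equation_iff[of _ "cen1 \<epsilon>"])

text \<open>For real c, psi c is the inversion in the unit circle about c followed by complex
  conjugation; unlike the inversion it is holomorphic.\<close>

definition psi :: "complex \<Rightarrow> complex \<Rightarrow> complex" where
  "psi c z = 1 / (z - c) + c"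

lemma Phi1_eq: "Phi1 \<epsilon> z = cnj (psi (cen1 \<epsilon>) z)"
  by (simp add: Phi1_def psi_def cen1_def complex_cnj_divide)

lemma Phi2_eq: "Phi2 \<epsilon> z = cnj (psi (cen2 \<epsilon>) z)"
  by (simp add: Phi2_def psi_def cen2_def complex_cnj_divide)

lemma psi_cnj: "cnj c = c \<Longrightarrow> psi c (cnj z) = cnj (psi c z)"
  by (simp add: psi_def complex_cnj_divide)

lemma norm_psi: "cmod (psi c z - c) = 1 / cmod (z - c)"
  by (simp add: psi_def norm_divide)

lemma psi_holomorphic: "psi c holomorphic_on - {c}"
  unfolding psi_def[abs_def] by (intro holomorphic_intros) auto

lemma psi_in_ball: "1 < cmod (z - c) \<Longrightarrow> psi c z \<in> ball c 1"
  by (simp add: dist_cmod norm_psi divide_less_eq)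

lemma psi_image_compl_cball: "psi c ` (- cball c 1) \<subseteq> ball c 1"
  using psi_in_ball by (force simp: dist_cmod)

lemma psi_sphere:
  assumes "cmod (z - c) = 1"
  shows "psi c z = c + cnj (z - c)"
proof -
  have "(z - c) * cnj (z - c) = 1"
    using assms complex_norm_square[of "z - c"] by simp
  moreover have "z - c \<noteq> 0" using assms by auto
  ultimately have "1 / (z - c) = cnj (z - c)" by (simp add: field_simps)
  then show ?thesis by (simp add: psi_def)
qed

lemma Phi1_sphere: "cmod (z - cen1 \<epsilon>) = 1 \<Longrightarrow> Phi1 \<epsilon> z = z"
  by (simp add: Phi1_eq psi_sphere)

lemma Phi1_radial:
  assumes n: "cmod n = 1" and s: "s \<noteq> 0"
  shows "Phi1 \<epsilon> (cen1 \<epsilon> + complex_of_real s * n) = cen1 \<epsilon> + complex_of_real (1 / s) * n"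
proof -
  have "n * cnj n = 1" using n complex_norm_square[of n] by simp
  moreover have "cnj n \<noteq> 0" using n by auto
  ultimately have "1 / cnj n = n" by (simp add: divide_eq_eq)
  moreover have "1 / (complex_of_real s * cnj n) = complex_of_real (1 / s) * (1 / cnj n)"
    by simp
  ultimately have "1 / (complex_of_real s * cnj n) = complex_of_real (1 / s) * n"
    by simp
  then show ?thesis by (simp add: Phi1_eq psi_def complex_cnj_divide)
qed

lemma Phi1_notin_closure_Bone:
  assumes "z \<noteq> cen1 \<epsilon>" "cmod (z - cen1 \<epsilon>) < 1"
  shows "Phi1 \<epsilon> z \<notin> closure (Bone \<epsilon>)"
proof -
  have "cmod (Phi1 \<epsilon> z - cen1 \<epsilon>) = 1 / cmod (z - cen1 \<epsilon>)"
    by (simp add: Phi1_eq norm_cnj_sub_real norm_psi)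
  moreover have "1 < 1 / cmod (z - cen1 \<epsilon>)" using assms by (simp add: less_divide_eq)
  ultimately show ?thesis by (simp add: closure_Bone dist_cmod)
qed

lemma Phi1_in_Bone: "1 < cmod (x - cen1 \<epsilon>) \<Longrightarrow> Phi1 \<epsilon> x \<in> Bone \<epsilon>"
  using psi_in_ball[of x "cen1 \<epsilon>"] by (simp add: Bone_def dist_cmod Phi1_eq norm_cnj_sub_real)

lemma psi1_image_Bzero: "0 < \<epsilon> \<Longrightarrow> psi (cen1 \<epsilon>) ` Bzero \<epsilon> \<subseteq> - cball (cen2 \<epsilon>) 1"
  using psi_image_compl_cball[of "cen1 \<epsilon>"] Bzero_subset_compl_cball(1) ball_subset_cball cball_cen1_subset by blast

definition T12 :: "real \<Rightarrow> complex \<Rightarrow> complex" where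
  "T12 \<epsilon> = psi (cen1 \<epsilon>) \<circ> psi (cen2 \<epsilon>)"

definition T21 :: "real \<Rightarrow> complex \<Rightarrow> complex" where
  "T21 \<epsilon> = psi (cen2 \<epsilon>) \<circ> psi (cen1 \<epsilon>)"

lemma Phi1_comp_Phi2: "Phi1 \<epsilon> \<circ> Phi2 \<epsilon> = T12 \<epsilon>"
  by (simp add: fun_eq_iff T12_def Phi1_eq Phi2_eq psi_cnj)

lemma Phi2_comp_Phi1: "Phi2 \<epsilon> \<circ> Phi1 \<epsilon> = T21 \<epsilon>"
  by (simp add: fun_eq_iff T21_def Phi1_eq Phi2_eq psi_cnj)

lemma funpow_T12_cnj: "(T12 \<epsilon> ^^ l) (cnj z) = cnj ((T12 \<epsilon> ^^ l) z)"
  by (induction l) (auto simp: T12_def psi_cnj)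

lemma funpow_T21_cnj: "(T21 \<epsilon> ^^ l) (cnj z) = cnj ((T21 \<epsilon> ^^ l) z)"
  by (induction l) (auto simp: T21_def psi_cnj)

lemma T12_holomorphic:
  assumes "0 < \<epsilon>"
  shows "T12 \<epsilon> holomorphic_on - cball (cen2 \<epsilon>) 1"
proof -
  have h2: "psi (cen2 \<epsilon>) holomorphic_on - cball (cen2 \<epsilon>) 1"
    by (rule holomorphic_on_subset[OF psi_holomorphic]) auto
  have h1: "psi (cen1 \<epsilon>) holomorphic_on - cball (cen1 \<epsilon>) 1"
    by (rule holomorphic_on_subset[OF psi_holomorphic]) auto
  have "psi (cen2 \<epsilon>) ` (- cball (cen2 \<epsilon>) 1) \<subseteq> - cball (cen1 \<epsilon>) 1"
    using psi_image_compl_cball ball_subset_cball cball_cen2_subset[OF assms] by blast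
  then show ?thesis unfolding T12_def by (rule holomorphic_on_compose_gen[OF h2 h1])
qed

lemma T12_image:
  assumes "0 < \<epsilon>"
  shows "T12 \<epsilon> ` (- cball (cen2 \<epsilon>) 1) \<subseteq> Bone \<epsilon>"
proof -
  have "psi (cen2 \<epsilon>) ` (- cball (cen2 \<epsilon>) 1) \<subseteq> - cball (cen1 \<epsilon>) 1"
    using psi_image_compl_cball ball_subset_cball cball_cen2_subset[OF assms] by blast
  then have "T12 \<epsilon> ` (- cball (cen2 \<epsilon>) 1) \<subseteq> psi (cen1 \<epsilon>) ` (- cball (cen1 \<epsilon>) 1)"
    unfolding T12_def image_comp[symmetric] by (rule image_mono)
  then show ?thesis using psi_image_compl_cball[of "cen1 \<epsilon>"] unfolding Bone_def by (rule subset_trans)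
qed

text \<open>Unlike the exterior of B1, this domain of holomorphy of T21 contains the circle \<open>\<partial>B1\<close>.\<close>

definition dom21 :: "real \<Rightarrow> complex set" where
  "dom21 \<epsilon> = - {cen1 \<epsilon>} \<inter> psi (cen1 \<epsilon>) -` (- cball (cen2 \<epsilon>) 1)"

lemma open_dom21: "open (dom21 \<epsilon>)"
  unfolding dom21_def
  by (rule continuous_open_preimage[OF holomorphic_on_imp_continuous_on[OF psi_holomorphic]]) auto

lemma T21_holomorphic: "T21 \<epsilon> holomorphic_on dom21 \<epsilon>"
proof -
  have h1: "psi (cen1 \<epsilon>) holomorphic_on dom21 \<epsilon>"
    by (rule holomorphic_on_subset[OF psi_holomorphic]) (auto simp: dom21_def)
  have h2: "psi (cen2 \<epsilon>) holomorphic_on - cball (cen2 \<epsilon>) 1"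
    by (rule holomorphic_on_subset[OF psi_holomorphic]) auto
  have "psi (cen1 \<epsilon>) ` dom21 \<epsilon> \<subseteq> - cball (cen2 \<epsilon>) 1"
    by (auto simp: dom21_def)
  then show ?thesis unfolding T21_def by (rule holomorphic_on_compose_gen[OF h1 h2])
qed

lemma T21_image: "T21 \<epsilon> ` dom21 \<epsilon> \<subseteq> Btwo \<epsilon>"
proof -
  have "psi (cen1 \<epsilon>) ` dom21 \<epsilon> \<subseteq> - cball (cen2 \<epsilon>) 1"
    by (auto simp: dom21_def)
  then have "T21 \<epsilon> ` dom21 \<epsilon> \<subseteq> psi (cen2 \<epsilon>) ` (- cball (cen2 \<epsilon>) 1)"
    unfolding T21_def image_comp[symmetric] by (rule image_mono)
  then show ?thesis using psi_image_compl_cball[of "cen2 \<epsilon>"] unfolding Btwo_def by (rule subset_trans)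
qed

lemma compl_cball_cen1_subset_dom21:
  assumes "0 < \<epsilon>"
  shows "- cball (cen1 \<epsilon>) 1 \<subseteq> dom21 \<epsilon>"
proof
  fix z assume z: "z \<in> - cball (cen1 \<epsilon>) 1"
  have "psi (cen1 \<epsilon>) ` (- cball (cen1 \<epsilon>) 1) \<subseteq> - cball (cen2 \<epsilon>) 1"
    using psi_image_compl_cball ball_subset_cball cball_cen1_subset[OF assms] by blast
  then have "psi (cen1 \<epsilon>) z \<in> - cball (cen2 \<epsilon>) 1" using z by blast
  moreover have "z \<noteq> cen1 \<epsilon>" using z by auto
  ultimately show "z \<in> dom21 \<epsilon>" by (simp add: dom21_def)
qed

lemma Btwo_subset_dom21:
  assumes "0 < \<epsilon>"
  shows "Btwo \<epsilon> \<subseteq> dom21 \<epsilon>"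
proof -
  have "Btwo \<epsilon> \<subseteq> cball (cen2 \<epsilon>) 1" by (simp add: Btwo_def ball_subset_cball)
  from subset_trans[OF subset_trans[OF this cball_cen2_subset[OF assms]] compl_cball_cen1_subset_dom21[OF assms]]
  show ?thesis .
qed

lemma Bzero_subset_dom21: "0 < \<epsilon> \<Longrightarrow> Bzero \<epsilon> \<subseteq> dom21 \<epsilon>"
  using Bzero_subset_compl_cball(1) compl_cball_cen1_subset_dom21 by blast

section \<open>The image series\<close>

definition L12 :: "real \<Rightarrow> complex \<Rightarrow> nat \<Rightarrow> complex \<Rightarrow> real" where
  "L12 \<epsilon> y l x = Lg y ((T12 \<epsilon> ^^ l) x)"

definition L21 :: "real \<Rightarrow> complex \<Rightarrow> nat \<Rightarrow> complex \<Rightarrow> real" where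
  "L21 \<epsilon> y l x = Lg y ((T21 \<epsilon> ^^ l) x)"

lemma L12_0: "L12 \<epsilon> y 0 x = Lg y x" and L21_0: "L21 \<epsilon> y 0 x = Lg y x"
  by (simp_all add: L12_def L21_def)

lemma Lg_cnj: "Lg y (cnj p) = Lg (cnj y) p"
proof -
  have "cnj p - y = cnj (p - cnj y)" by simp
  then show ?thesis by (simp only: Lg_def complex_mod_cnj)
qed

lemma L12_Phi1: "L12 \<epsilon> y l (Phi1 \<epsilon> x) = L12 \<epsilon> (cnj y) l (psi (cen1 \<epsilon>) x)"
  by (simp add: L12_def Phi1_eq funpow_T12_cnj Lg_cnj)

lemma L21_Phi2: "L21 \<epsilon> y l (Phi2 \<epsilon> x) = L21 \<epsilon> (cnj y) l (psi (cen2 \<epsilon>) x)"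
  by (simp add: L21_def Phi2_eq funpow_T21_cnj Lg_cnj)

lemma L21_Suc: "L21 \<epsilon> y (Suc l) x = L21 \<epsilon> y l (Phi2 \<epsilon> (Phi1 \<epsilon> x))"
proof -
  have "T21 \<epsilon> x = Phi2 \<epsilon> (Phi1 \<epsilon> x)" by (simp flip: Phi2_comp_Phi1)
  then show ?thesis by (simp add: L21_def funpow_swap1)
qed

lemma holo_grad_series_L12_comp:
  assumes "0 < \<epsilon>" "\<bar>q\<bar> < 1" "1 < cmod (y - cen1 \<epsilon>)" "open U" "S holomorphic_on U"
    and "S ` U \<subseteq> - cball (cen2 \<epsilon>) 1" "\<And>x. x \<in> U \<Longrightarrow> S x \<noteq> y"
  shows "holo_grad_series U q (\<lambda>l x. L12 \<epsilon> y l (S x))"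
  unfolding L12_def
proof (rule holo_grad_series_funpow[OF _ T12_holomorphic T12_image _ _ ball_dist_bounds])
  show "Bone \<epsilon> \<subseteq> - cball (cen2 \<epsilon>) 1"
    using cball_cen1_subset[OF assms(1)] ball_subset_cball unfolding Bone_def by blast
qed (use assms in \<open>auto simp: Bone_def\<close>)

lemma holo_grad_series_L21_comp:
  assumes "0 < \<epsilon>" "\<bar>q\<bar> < 1" "1 < cmod (y - cen2 \<epsilon>)" "open U" "S holomorphic_on U"
    and "S ` U \<subseteq> dom21 \<epsilon>" "\<And>x. x \<in> U \<Longrightarrow> S x \<noteq> y"
  shows "holo_grad_series U q (\<lambda>l x. L21 \<epsilon> y l (S x))"
  unfolding L21_def
  by (rule holo_grad_series_funpow[OF open_dom21 T21_holomorphic T21_image Btwo_subset_dom21 _ ball_dist_bounds])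
     (use assms in \<open>auto simp: Btwo_def\<close>)

lemma holo_grad_series_L12:
  assumes "0 < \<epsilon>" "\<bar>q\<bar> < 1" "1 < cmod (y - cen1 \<epsilon>)" "open U"
    and "U \<subseteq> - cball (cen2 \<epsilon>) 1" "y \<notin> U"
  shows "holo_grad_series U q (L12 \<epsilon> y)"
  using holo_grad_series_L12_comp[of \<epsilon> q y U "\<lambda>x. x"] assms by auto

lemma holo_grad_series_L12_Suc:
  assumes "0 < \<epsilon>" "\<bar>q\<bar> < 1" "1 < cmod (y - cen1 \<epsilon>)" "open U" "U \<subseteq> - cball (cen2 \<epsilon>) 1"
  shows "holo_grad_series U q (\<lambda>l. L12 \<epsilon> y (Suc l))"
proof -
  have img: "T12 \<epsilon> ` U \<subseteq> Bone \<epsilon>" using T12_image[OF assms(1)] assms(5) by blast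
  have "holo_grad_series U q (\<lambda>l x. L12 \<epsilon> y l (T12 \<epsilon> x))"
  proof (rule holo_grad_series_L12_comp[OF assms(1-4)])
    show "T12 \<epsilon> holomorphic_on U" using T12_holomorphic[OF assms(1)] assms(5) by (rule holomorphic_on_subset)
    show "T12 \<epsilon> ` U \<subseteq> - cball (cen2 \<epsilon>) 1"
      using img cball_cen1_subset[OF assms(1)] ball_subset_cball unfolding Bone_def by blast
    show "T12 \<epsilon> x \<noteq> y" if "x \<in> U" for x
      using img that assms(3) by (auto simp: Bone_def dist_cmod)
  qed
  then show ?thesis by (rule holo_grad_series_cong) (simp add: L12_def funpow_swap1)
qed

lemma holo_grad_series_L12_Phi1:
  assumes "0 < \<epsilon>" "\<bar>q\<bar> < 1" "1 < cmod (y - cen1 \<epsilon>)" "open U" "cen1 \<epsilon> \<notin> U"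
    and "psi (cen1 \<epsilon>) ` U \<subseteq> - cball (cen2 \<epsilon>) 1" "\<And>x. x \<in> U \<Longrightarrow> Phi1 \<epsilon> x \<noteq> y"
  shows "holo_grad_series U q (\<lambda>l x. L12 \<epsilon> y l (Phi1 \<epsilon> x))"
proof -
  have "holo_grad_series U q (\<lambda>l x. L12 \<epsilon> (cnj y) l (psi (cen1 \<epsilon>) x))"
  proof (rule holo_grad_series_L12_comp[OF assms(1,2) _ assms(4) _ assms(6)])
    show "1 < cmod (cnj y - cen1 \<epsilon>)" using assms(3) by (simp add: norm_cnj_sub_real)
    show "psi (cen1 \<epsilon>) holomorphic_on U"
      by (rule holomorphic_on_subset[OF psi_holomorphic]) (use assms(5) in auto)
    show "psi (cen1 \<epsilon>) x \<noteq> cnj y" if "x \<in> U" for x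
      using assms(7)[OF that] by (auto simp: Phi1_eq)
  qed
  then show ?thesis by (simp add: L12_Phi1)
qed

lemma holo_grad_series_L21:
  assumes "0 < \<epsilon>" "\<bar>q\<bar> < 1" "1 < cmod (y - cen2 \<epsilon>)" "open U" "U \<subseteq> dom21 \<epsilon>" "y \<notin> U"
  shows "holo_grad_series U q (L21 \<epsilon> y)"
  using holo_grad_series_L21_comp[of \<epsilon> q y U "\<lambda>x. x"] assms by auto

lemma holo_grad_series_L21_Suc:
  assumes "0 < \<epsilon>" "\<bar>q\<bar> < 1" "1 < cmod (y - cen2 \<epsilon>)" "open U" "U \<subseteq> dom21 \<epsilon>"
  shows "holo_grad_series U q (\<lambda>l. L21 \<epsilon> y (Suc l))"
proof -
  have img: "T21 \<epsilon> ` U \<subseteq> Btwo \<epsilon>" using T21_image assms(5) by blast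
  have "holo_grad_series U q (\<lambda>l x. L21 \<epsilon> y l (T21 \<epsilon> x))"
  proof (rule holo_grad_series_L21_comp[OF assms(1-4)])
    show "T21 \<epsilon> holomorphic_on U" using T21_holomorphic assms(5) by (rule holomorphic_on_subset)
    show "T21 \<epsilon> ` U \<subseteq> dom21 \<epsilon>" using img Btwo_subset_dom21[OF assms(1)] by blast
    show "T21 \<epsilon> x \<noteq> y" if "x \<in> U" for x
      using img that assms(3) by (auto simp: Btwo_def dist_cmod)
  qed
  then show ?thesis by (rule holo_grad_series_cong) (simp add: L21_def funpow_swap1)
qed

lemma holo_grad_series_L21_Phi2:
  assumes "0 < \<epsilon>" "\<bar>q\<bar> < 1" "1 < cmod (y - cen2 \<epsilon>)" "open U" "U \<subseteq> - cball (cen2 \<epsilon>) 1"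
  shows "holo_grad_series U q (\<lambda>l x. L21 \<epsilon> y l (Phi2 \<epsilon> x))"
proof -
  have img: "psi (cen2 \<epsilon>) ` U \<subseteq> Btwo \<epsilon>"
    using psi_image_compl_cball[of "cen2 \<epsilon>"] assms(5) unfolding Btwo_def by blast
  have "holo_grad_series U q (\<lambda>l x. L21 \<epsilon> (cnj y) l (psi (cen2 \<epsilon>) x))"
  proof (rule holo_grad_series_L21_comp[OF assms(1,2) _ assms(4)])
    show "1 < cmod (cnj y - cen2 \<epsilon>)" using assms(3) by (simp add: norm_cnj_sub_real)
    show "psi (cen2 \<epsilon>) holomorphic_on U"
      by (rule holomorphic_on_subset[OF psi_holomorphic]) (use assms(5) in auto)
    show "psi (cen2 \<epsilon>) ` U \<subseteq> dom21 \<epsilon>" using img Btwo_subset_dom21[OF assms(1)] by blast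
    show "psi (cen2 \<epsilon>) x \<noteq> cnj y" if "x \<in> U" for x
      using img that assms(3) by (auto simp: Btwo_def dist_cmod norm_cnj_sub_real)
  qed
  then show ?thesis by (simp add: L21_Phi2)
qed

lemma holo_grad_on_Lg:
  assumes "open U" "y \<notin> U"
  shows "holo_grad_on U (Lg y)"
proof -
  have "has_holo_grad U (\<lambda>x. ln (cmod (x - y))) (\<lambda>z. deriv (\<lambda>x. x - y) z / (z - y))"
    using assms by (intro has_holo_grad_ln_cmod) (auto intro!: holomorphic_intros)
  then show ?thesis unfolding holo_grad_on_def Lg_def[abs_def] by blast
qed

lemma holo_grad_on_Lg_Phi1:
  assumes "open U" "cen1 \<epsilon> \<notin> U" "\<And>x. x \<in> U \<Longrightarrow> Phi1 \<epsilon> x \<noteq> y"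
  shows "holo_grad_on U (\<lambda>x. Lg y (Phi1 \<epsilon> x))"
proof -
  have "psi (cen1 \<epsilon>) holomorphic_on U"
    by (rule holomorphic_on_subset[OF psi_holomorphic]) (use assms(2) in auto)
  moreover have "psi (cen1 \<epsilon>) x - cnj y \<noteq> 0" if "x \<in> U" for x
    using assms(3)[OF that] unfolding Phi1_eq by (metis complex_cnj_cnj eq_iff_diff_eq_0)
  ultimately have "has_holo_grad U (\<lambda>x. ln (cmod (psi (cen1 \<epsilon>) x - cnj y)))
      (\<lambda>z. deriv (\<lambda>x. psi (cen1 \<epsilon>) x - cnj y) z / (psi (cen1 \<epsilon>) z - cnj y))"
    by (intro has_holo_grad_ln_cmod[OF assms(1)]) (auto intro!: holomorphic_intros)
  then have "holo_grad_on U (\<lambda>x. Lg (cnj y) (psi (cen1 \<epsilon>) x))"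
    unfolding holo_grad_on_def Lg_def by blast
  then show ?thesis by (simp add: Phi1_eq Lg_cnj)
qed

text \<open>A neighbourhood of \<open>\<partial>B1\<close> on which all the image series of G converge.\<close>

definition nbhd1 :: "real \<Rightarrow> complex \<Rightarrow> complex set" where
  "nbhd1 \<epsilon> y = (- {cen1 \<epsilon>} \<inter> psi (cen1 \<epsilon>) -` (- cball (cen2 \<epsilon>) 1 - {cnj y})) \<inter> (- cball (cen2 \<epsilon>) 1 - {y})"

lemma open_nbhd1: "open (nbhd1 \<epsilon> y)"
  unfolding nbhd1_def
  by (intro open_Int continuous_open_preimage[OF holomorphic_on_imp_continuous_on[OF psi_holomorphic]]
      open_Diff) auto

lemma nbhd1_subset: "nbhd1 \<epsilon> y \<subseteq> - cball (cen2 \<epsilon>) 1" "nbhd1 \<epsilon> y \<subseteq> dom21 \<epsilon>"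
  "psi (cen1 \<epsilon>) ` nbhd1 \<epsilon> y \<subseteq> - cball (cen2 \<epsilon>) 1"
  and notin_nbhd1: "cen1 \<epsilon> \<notin> nbhd1 \<epsilon> y" "y \<notin> nbhd1 \<epsilon> y"
  and Phi1_nbhd1: "x \<in> nbhd1 \<epsilon> y \<Longrightarrow> Phi1 \<epsilon> x \<noteq> y"
  by (auto simp: nbhd1_def dom21_def Phi1_eq)

lemma sphere_in_nbhd1:
  assumes "0 < \<epsilon>" "cmod (x0 - cen1 \<epsilon>) = 1" "cmod (y - cen1 \<epsilon>) \<noteq> 1"
  shows "x0 \<in> nbhd1 \<epsilon> y"
proof -
  have "psi (cen1 \<epsilon>) x0 = cnj x0"
    using psi_sphere[OF assms(2)] by simp
  moreover have "1 < cmod (x0 - cen2 \<epsilon>)" "1 < cmod (cnj x0 - cen2 \<epsilon>)"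
    using cball_cen1_sep[OF assms(1), of x0] assms(2) by (simp_all add: norm_cnj_sub_real)
  moreover have "x0 \<noteq> y" "x0 \<noteq> cen1 \<epsilon>" using assms(2,3) by auto
  ultimately show ?thesis by (auto simp: nbhd1_def dist_cmod)
qed

lemma holo_grad_series_L12_nbhd1:
  assumes "0 < \<epsilon>" "\<bar>q\<bar> < 1" "1 < cmod (y - cen1 \<epsilon>)"
  shows "holo_grad_series (nbhd1 \<epsilon> y) q (L12 \<epsilon> y)"
    and "holo_grad_series (nbhd1 \<epsilon> y) q (\<lambda>l. L12 \<epsilon> y (Suc l))"
    and "holo_grad_series (nbhd1 \<epsilon> y) q (\<lambda>l x. L12 \<epsilon> y l (Phi1 \<epsilon> x))"
  using holo_grad_series_L12[OF assms open_nbhd1 nbhd1_subset(1) notin_nbhd1(2)]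
    holo_grad_series_L12_Suc[OF assms open_nbhd1 nbhd1_subset(1)]
    holo_grad_series_L12_Phi1[OF assms open_nbhd1 notin_nbhd1(1) nbhd1_subset(3) Phi1_nbhd1]
  by blast+

lemma holo_grad_series_L21_nbhd1:
  assumes "0 < \<epsilon>" "\<bar>q\<bar> < 1" "1 < cmod (y - cen2 \<epsilon>)"
  shows "holo_grad_series (nbhd1 \<epsilon> y) q (\<lambda>l. L21 \<epsilon> y (Suc l))"
    and "holo_grad_series (nbhd1 \<epsilon> y) q (\<lambda>l x. L21 \<epsilon> y l (Phi2 \<epsilon> x))"
  using holo_grad_series_L21_Suc[OF assms open_nbhd1 nbhd1_subset(2)]
    holo_grad_series_L21_Phi2[OF assms open_nbhd1 nbhd1_subset(1)]
  by blast+

section \<open>Reflection in the circle \<open>\<partial>B1\<close>\<close>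

lemma pd_comp_Phi1_sphere:
  assumes f: "f differentiable at x0" and x0: "cmod (x0 - cen1 \<epsilon>) = 1"
  shows "pd (x0 - cen1 \<epsilon>) (\<lambda>x. f (Phi1 \<epsilon> x)) x0 = - pd (x0 - cen1 \<epsilon>) f x0"
proof -
  define n where "n = x0 - cen1 \<epsilon>"
  obtain f' where f': "(f has_derivative f') (at x0)" using f by (auto simp: differentiable_def)
  have "((\<lambda>t. 1 / (1 + t) - 1) has_real_derivative -1) (at (0::real))"
    by (auto intro!: derivative_eq_intros)
  from has_real_derivative_along_path[OF f' this]
  have D: "((\<lambda>t. f (x0 + complex_of_real (1 / (1 + t) - 1) * n)) has_real_derivative - f' n) (at 0)"
    by simp
  have "\<forall>\<^sub>F t in nhds (0::real). t \<in> {-1<..}" by (rule eventually_nhds_in_open) auto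
  then have ev: "\<forall>\<^sub>F t in nhds 0. f (Phi1 \<epsilon> (x0 + complex_of_real t * n)) = f (x0 + complex_of_real (1 / (1 + t) - 1) * n)"
  proof eventually_elim
    case (elim t)
    have "x0 + complex_of_real t * n = cen1 \<epsilon> + complex_of_real (1 + t) * n"
      by (simp add: n_def algebra_simps)
    moreover have "cen1 \<epsilon> + complex_of_real (1 / (1 + t)) * n = x0 + complex_of_real (1 / (1 + t) - 1) * n"
      by (simp add: n_def algebra_simps)
    ultimately show ?case
      using Phi1_radial[of n "1 + t" \<epsilon>] x0 elim by (simp add: n_def)
  qed
  have "pd n (\<lambda>x. f (Phi1 \<epsilon> x)) x0 = - f' n"
    unfolding pd_def by (rule DERIV_imp_deriv) (subst DERIV_cong_ev[OF refl ev refl], rule D)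
  then show ?thesis using pd_eq[OF f'] by (simp add: n_def)
qed

lemma pow_series_reflect_sphere:
  assumes \<phi>: "holo_grad_series N q \<phi>" and \<psi>: "holo_grad_series N q \<psi>"
    and refl: "\<And>l x. \<phi> l x = \<psi> l (Phi1 \<epsilon> x)" and x0: "x0 \<in> N" "cmod (x0 - cen1 \<epsilon>) = 1"
  shows "pow_series q \<phi> x0 = pow_series q \<psi> x0"
    and "pd (x0 - cen1 \<epsilon>) (pow_series q \<phi>) x0 = - pd (x0 - cen1 \<epsilon>) (pow_series q \<psi>) x0"
proof -
  show "pow_series q \<phi> x0 = pow_series q \<psi> x0"
    by (simp add: pow_series_def refl Phi1_sphere[OF x0(2)])
  have term_eq: "pd (x0 - cen1 \<epsilon>) (\<phi> l) x0 = - pd (x0 - cen1 \<epsilon>) (\<psi> l) x0" for l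
  proof -
    have "\<phi> l = (\<lambda>x. \<psi> l (Phi1 \<epsilon> x))" by (simp add: fun_eq_iff refl)
    moreover have "\<psi> l differentiable at x0"
      using holo_grad_on_imp_differentiable[OF holo_grad_series_term[OF \<psi>] x0(1)] .
    ultimately show ?thesis using pd_comp_Phi1_sphere x0(2) by simp
  qed
  have "(\<lambda>l. - (q ^ l * pd (x0 - cen1 \<epsilon>) (\<psi> l) x0)) sums pd (x0 - cen1 \<epsilon>) (pow_series q \<phi>) x0"
    using pd_pow_series[OF \<phi> x0(1), of "x0 - cen1 \<epsilon>"] by (simp add: term_eq)
  moreover have "(\<lambda>l. - (q ^ l * pd (x0 - cen1 \<epsilon>) (\<psi> l) x0)) sums - pd (x0 - cen1 \<epsilon>) (pow_series q \<psi>) x0"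
    using pd_pow_series[OF \<psi> x0(1)] by (rule sums_minus)
  ultimately show "pd (x0 - cen1 \<epsilon>) (pow_series q \<phi>) x0 = - pd (x0 - cen1 \<epsilon>) (pow_series q \<psi>) x0"
    by (rule sums_unique2)
qed

lemma L12_series_reflect:
  assumes "0 < \<epsilon>" "\<bar>q\<bar> < 1" "1 < cmod (y - cen1 \<epsilon>)" "cmod (x0 - cen1 \<epsilon>) = 1"
  shows "pow_series q (\<lambda>l x. L12 \<epsilon> y l (Phi1 \<epsilon> x)) x0 = pow_series q (L12 \<epsilon> y) x0"
    and "pd (x0 - cen1 \<epsilon>) (pow_series q (\<lambda>l x. L12 \<epsilon> y l (Phi1 \<epsilon> x))) x0
       = - pd (x0 - cen1 \<epsilon>) (pow_series q (L12 \<epsilon> y)) x0"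
  using pow_series_reflect_sphere[OF holo_grad_series_L12_nbhd1(3,1)[OF assms(1-3)] _
      sphere_in_nbhd1[OF assms(1,4)] assms(4)] assms(3)
  by auto

lemma L21_series_reflect:
  assumes "0 < \<epsilon>" "\<bar>q\<bar> < 1" "1 < cmod (y - cen2 \<epsilon>)" "cmod (x0 - cen1 \<epsilon>) = 1"
    and "cmod (y - cen1 \<epsilon>) \<noteq> 1"
  shows "pow_series q (\<lambda>l. L21 \<epsilon> y (Suc l)) x0 = pow_series q (\<lambda>l x. L21 \<epsilon> y l (Phi2 \<epsilon> x)) x0"
    and "pd (x0 - cen1 \<epsilon>) (pow_series q (\<lambda>l. L21 \<epsilon> y (Suc l))) x0
       = - pd (x0 - cen1 \<epsilon>) (pow_series q (\<lambda>l x. L21 \<epsilon> y l (Phi2 \<epsilon> x))) x0"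
  using pow_series_reflect_sphere[OF holo_grad_series_L21_nbhd1[OF assms(1-3)] L21_Suc
      sphere_in_nbhd1[OF assms(1,4,5)] assms(4)]
  by auto

section \<open>Transmission conditions from local extensions\<close>

definition transmission_data :: "real \<Rightarrow> complex \<Rightarrow> complex \<Rightarrow> (complex \<Rightarrow> real) \<Rightarrow> real \<Rightarrow> bool" where
  "transmission_data \<epsilon> c x0 f k \<longleftrightarrow> cmod (x0 - c) = 1 \<and>
     (\<exists>N F0 F1. open N \<and> x0 \<in> N \<and> holo_grad_on N F0 \<and> holo_grad_on N F1 \<and>
        (\<forall>x\<in>N \<inter> Bzero \<epsilon>. f x = F0 x) \<and> (\<forall>x\<in>N \<inter> ball c 1. f x = F1 x) \<and>
        F0 x0 = F1 x0 \<and> pd (x0 - c) F0 x0 = k * pd (x0 - c) F1 x0)"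

lemma transmission_dataI:
  assumes "cmod (x0 - c) = 1" "open N" "x0 \<in> N" "holo_grad_on N F" "holo_grad_on N G"
    and "\<And>x. x \<in> N \<Longrightarrow> x \<in> Bzero \<epsilon> \<Longrightarrow> f x = F x" "\<And>x. x \<in> N \<Longrightarrow> x \<in> ball c 1 \<Longrightarrow> f x = G x"
    and "F x0 = G x0" "pd (x0 - c) F x0 = k * pd (x0 - c) G x0"
  shows "transmission_data \<epsilon> c x0 f k"
  unfolding transmission_data_def using assms by blast

lemma tendsto_local_extension:
  assumes F: "has_holo_grad N F H" and x0: "x0 \<in> N" "x0 \<noteq> c" and S: "open S"
    and eq: "\<And>x. x \<in> N \<Longrightarrow> x \<in> S \<Longrightarrow> f x = F x"
  shows "(f \<longlongrightarrow> F x0) (at x0 within S)"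
    and "((\<lambda>x. pd (sgn (x - c)) f x) \<longlongrightarrow> pd (sgn (x0 - c)) F x0) (at x0 within S)"
proof -
  have N: "open N" and H: "H holomorphic_on N" using F by (auto simp: has_holo_grad_def)
  have ev: "\<forall>\<^sub>F x in at x0 within S. x \<in> N \<and> x \<in> S"
    unfolding eventually_at_topological using N x0(1) by blast
  have "isCont F x0"
    using F x0(1) unfolding has_holo_grad_def by (meson has_derivative_continuous)
  then have "(F \<longlongrightarrow> F x0) (at x0 within S)"
    unfolding isCont_def by (rule tendsto_mono[OF at_le[OF subset_UNIV]])
  then show "(f \<longlongrightarrow> F x0) (at x0 within S)"
    by (rule tendsto_cong[THEN iffD2, rotated]) (use ev eq in \<open>auto elim: eventually_mono\<close>)
  have "isCont H x0"
    using H N x0(1) by (meson holomorphic_on_imp_continuous_on continuous_on_eq_continuous_at)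
  then have "(H \<longlongrightarrow> H x0) (at x0 within S)"
    unfolding isCont_def by (rule tendsto_mono[OF at_le[OF subset_UNIV]])
  then have "((\<lambda>x. Re (H x * sgn (x - c))) \<longlongrightarrow> Re (H x0 * sgn (x0 - c))) (at x0 within S)"
    using x0(2) by (intro tendsto_intros) auto
  moreover have "\<forall>\<^sub>F x in at x0 within S. pd (sgn (x - c)) f x = Re (H x * sgn (x - c))"
    using ev
  proof eventually_elim
    case (elim x)
    have "pd (sgn (x - c)) f x = pd (sgn (x - c)) F x"
      by (rule pd_cong_open[of "N \<inter> S"]) (use N S elim eq in auto)
    then show ?case using has_holo_grad_pd[OF F] elim by simp
  qed
  ultimately show "((\<lambda>x. pd (sgn (x - c)) f x) \<longlongrightarrow> pd (sgn (x0 - c)) F x0) (at x0 within S)"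
    using has_holo_grad_pd[OF F x0(1)] by (auto intro: tendsto_cong[THEN iffD2, rotated])
qed

lemma transmission_data_imp_transmission:
  assumes T: "transmission_data \<epsilon> c x0 f k" and a: "\<And>x. x \<in> ball c 1 \<Longrightarrow> acoef \<epsilon> k1 k2 x = k"
  shows "transmission \<epsilon> k1 k2 c x0 f"
proof -
  obtain N F0 F1 H0 H1 where N: "open N" "x0 \<in> N" and F0: "has_holo_grad N F0 H0" and F1: "has_holo_grad N F1 H1"
    and eq0: "\<And>x. x \<in> N \<Longrightarrow> x \<in> Bzero \<epsilon> \<Longrightarrow> f x = F0 x"
    and eq1: "\<And>x. x \<in> N \<Longrightarrow> x \<in> ball c 1 \<Longrightarrow> f x = F1 x"
    and val: "F0 x0 = F1 x0" and flux: "pd (x0 - c) F0 x0 = k * pd (x0 - c) F1 x0"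
    and x0: "cmod (x0 - c) = 1"
    using T unfolding transmission_data_def holo_grad_on_def by blast
  have x0c: "x0 \<noteq> c" and sg: "sgn (x0 - c) = x0 - c" using x0 by (auto simp: sgn_div_norm)
  note lim0 = tendsto_local_extension[OF F0 N(2) x0c open_Bzero eq0]
  note lim1 = tendsto_local_extension[OF F1 N(2) x0c open_ball[of c 1] eq1]
  have a0: "acoef \<epsilon> k1 k2 x = 1" if "x \<in> Bzero \<epsilon>" for x
    using that by (auto simp: acoef_def Bzero_def dest: closure_subset[THEN subsetD])
  have "((\<lambda>x. acoef \<epsilon> k1 k2 x * pd (sgn (x - c)) f x) \<longlongrightarrow> pd (x0 - c) F0 x0) (at x0 within Bzero \<epsilon>)"
    using lim0(2) unfolding sg
    by (rule tendsto_cong[THEN iffD2, rotated]) (auto simp: a0 eventually_at_filter)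
  moreover have "((\<lambda>x. acoef \<epsilon> k1 k2 x * pd (sgn (x - c)) f x) \<longlongrightarrow> pd (x0 - c) F0 x0) (at x0 within ball c 1)"
    using tendsto_mult_left[OF lim1(2), of k] unfolding sg flux
    by (rule tendsto_cong[THEN iffD2, rotated]) (auto simp: a eventually_at_filter)
  ultimately show ?thesis
    unfolding transmission_def using lim0(1) lim1(1) val by auto
qed

lemma transmission_data_uminus:
  assumes "transmission_data \<epsilon> c x0 f k"
  shows "transmission_data \<epsilon> (- c) (- x0) (\<lambda>x. f (- x)) k"
proof -
  obtain N F0 F1 where N: "open N" "x0 \<in> N" "holo_grad_on N F0" "holo_grad_on N F1"
    and eq0: "\<And>x. x \<in> N \<Longrightarrow> x \<in> Bzero \<epsilon> \<Longrightarrow> f x = F0 x"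
    and eq1: "\<And>x. x \<in> N \<Longrightarrow> x \<in> ball c 1 \<Longrightarrow> f x = F1 x"
    and val: "F0 x0 = F1 x0" and flux: "pd (x0 - c) F0 x0 = k * pd (x0 - c) F1 x0"
    and x0: "cmod (x0 - c) = 1"
    using assms unfolding transmission_data_def by blast
  show ?thesis
  proof (rule transmission_dataI[where N = "uminus ` N" and F = "\<lambda>x. F0 (- x)" and G = "\<lambda>x. F1 (- x)"])
    show "open (uminus ` N)" using N(1) by (rule open_negations)
    show "holo_grad_on (uminus ` N) (\<lambda>x. F0 (- x))" "holo_grad_on (uminus ` N) (\<lambda>x. F1 (- x))"
      using holo_grad_on_uminus N(3,4) by blast+
    show "f (- x) = F1 (- x)" if "x \<in> uminus ` N" "x \<in> ball (- c) 1" for x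
      using eq1 that by (auto simp: mem_uminus_image dist_cmod norm_minus_commute add.commute)
  qed (use N x0 val flux eq0 in \<open>auto simp: mem_uminus_image uminus_in_Bzero_iff pd_uminus
      norm_minus_commute add.commute\<close>)
qed

section \<open>The Green function on each region\<close>

text \<open>In the names below, Gfun_S_R gives G(x, y) for a source y in S and a point x in (the
  closure of) R.\<close>

context
  fixes \<epsilon> k1 k2 :: real and y x :: complex
  assumes \<epsilon>: "0 < \<epsilon>"
begin

lemma Gfun_Bzero_Bone:
  assumes "y \<in> Bzero \<epsilon>" "x \<in> closure (Bone \<epsilon>)"
    and "summable (\<lambda>l. (contrast k1 * contrast k2) ^ l * L12 \<epsilon> y l x)"
    and "summable (\<lambda>l. (contrast k1 * contrast k2) ^ l * L21 \<epsilon> y l (Phi2 \<epsilon> x))"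
  shows "Gfun \<epsilon> k1 k2 x y = 2 / (k1 + 1) * (pow_series (contrast k1 * contrast k2) (L12 \<epsilon> y) x
           - contrast k2 * pow_series (contrast k1 * contrast k2) (\<lambda>l x. L21 \<epsilon> y l (Phi2 \<epsilon> x)) x)"
  using assms regions_disjoint(3)[OF \<epsilon> assms(2)] suminf_pow_diff[OF assms(3,4)]
  by (simp add: Gfun_def Let_def Phi1_comp_Phi2 Phi2_comp_Phi1 pow_series_def L12_def L21_def)

lemma Gfun_Bzero_Bzero:
  assumes "y \<in> Bzero \<epsilon>" "x \<in> Bzero \<epsilon>"
    and "summable (\<lambda>l. (contrast k1 * contrast k2) ^ l * L12 \<epsilon> y (Suc l) x)"
    and "summable (\<lambda>l. (contrast k1 * contrast k2) ^ l * L21 \<epsilon> y (Suc l) x)"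
    and "summable (\<lambda>l. (contrast k1 * contrast k2) ^ l * L21 \<epsilon> y l (Phi2 \<epsilon> x))"
    and "summable (\<lambda>l. (contrast k1 * contrast k2) ^ l * L12 \<epsilon> y l (Phi1 \<epsilon> x))"
  shows "Gfun \<epsilon> k1 k2 x y = Lg y x
      + contrast k1 * contrast k2 * pow_series (contrast k1 * contrast k2) (\<lambda>l. L12 \<epsilon> y (Suc l)) x
      + contrast k1 * contrast k2 * pow_series (contrast k1 * contrast k2) (\<lambda>l. L21 \<epsilon> y (Suc l)) x
      - contrast k2 * pow_series (contrast k1 * contrast k2) (\<lambda>l x. L21 \<epsilon> y l (Phi2 \<epsilon> x)) x
      - contrast k1 * pow_series (contrast k1 * contrast k2) (\<lambda>l x. L12 \<epsilon> y l (Phi1 \<epsilon> x)) x"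
  using assms regions_disjoint(5)[OF \<epsilon> assms(2)]
    suminf_pow_combination[OF assms(3-6), of "contrast k2" "contrast k1"]
  by (simp add: Gfun_def Let_def Phi1_comp_Phi2 Phi2_comp_Phi1 pow_series_def L12_def L21_def)

lemma Gfun_Bone_Bone:
  assumes "y \<in> Bone \<epsilon>" "x \<in> closure (Bone \<epsilon>)"
  shows "Gfun \<epsilon> k1 k2 x y = 1 / k1 * (Lg y x + contrast k1 * Lg y (Phi1 \<epsilon> x))
      - 4 * contrast k2 / (k1 + 1)\<^sup>2 * pow_series (contrast k1 * contrast k2) (\<lambda>l x. L21 \<epsilon> y l (Phi2 \<epsilon> x)) x"
  using assms regions_disjoint(11)[OF \<epsilon> assms(1)]
  by (simp add: Gfun_def Let_def Phi2_comp_Phi1 pow_series_def L21_def)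

lemma Gfun_Bone_Bzero:
  assumes "y \<in> Bone \<epsilon>" "x \<in> Bzero \<epsilon>"
    and "summable (\<lambda>l. (contrast k1 * contrast k2) ^ l * L21 \<epsilon> y l x)"
    and "summable (\<lambda>l. (contrast k1 * contrast k2) ^ l * L21 \<epsilon> y l (Phi2 \<epsilon> x))"
  shows "Gfun \<epsilon> k1 k2 x y = 2 / (k1 + 1) * (pow_series (contrast k1 * contrast k2) (L21 \<epsilon> y) x
           - contrast k2 * pow_series (contrast k1 * contrast k2) (\<lambda>l x. L21 \<epsilon> y l (Phi2 \<epsilon> x)) x)"
  using assms regions_disjoint(11)[OF \<epsilon> assms(1)] regions_disjoint(5)[OF \<epsilon> assms(2)] suminf_pow_diff[OF assms(3,4)]
  by (simp add: Gfun_def Let_def Phi2_comp_Phi1 pow_series_def L21_def)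

lemma Gfun_Bone_Btwo:
  assumes "y \<in> Bone \<epsilon>" "x \<in> closure (Btwo \<epsilon>)"
  shows "Gfun \<epsilon> k1 k2 x y = 4 / ((k1 + 1) * (k2 + 1)) * pow_series (contrast k1 * contrast k2) (L21 \<epsilon> y) x"
  using assms regions_disjoint(11)[OF \<epsilon> assms(1)] regions_disjoint(2,4)[OF \<epsilon> assms(2)]
  by (simp add: Gfun_def Let_def Phi2_comp_Phi1 pow_series_def L21_def)

lemma Gfun_Btwo_Bone:
  assumes "y \<in> Btwo \<epsilon>" "x \<in> closure (Bone \<epsilon>)"
  shows "Gfun \<epsilon> k1 k2 x y = 4 / ((k1 + 1) * (k2 + 1)) * pow_series (contrast k1 * contrast k2) (L12 \<epsilon> y) x"
  using assms regions_disjoint(10,12)[OF \<epsilon> assms(1)]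
  by (simp add: Gfun_def Let_def Phi1_comp_Phi2 pow_series_def L12_def)

lemma Gfun_Btwo_Bzero:
  assumes "y \<in> Btwo \<epsilon>" "x \<in> Bzero \<epsilon>"
    and "summable (\<lambda>l. (contrast k1 * contrast k2) ^ l * L12 \<epsilon> y l x)"
    and "summable (\<lambda>l. (contrast k1 * contrast k2) ^ l * L12 \<epsilon> y l (Phi1 \<epsilon> x))"
  shows "Gfun \<epsilon> k1 k2 x y = 2 / (k2 + 1) * (pow_series (contrast k1 * contrast k2) (L12 \<epsilon> y) x
           - contrast k1 * pow_series (contrast k1 * contrast k2) (\<lambda>l x. L12 \<epsilon> y l (Phi1 \<epsilon> x)) x)"
  using assms regions_disjoint(10,12)[OF \<epsilon> assms(1)] regions_disjoint(5)[OF \<epsilon> assms(2)] suminf_pow_diff[OF assms(3,4)]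
  by (simp add: Gfun_def Let_def Phi1_comp_Phi2 pow_series_def L12_def)

end

lemma Phi1_uminus: "Phi1 \<epsilon> (- z) = - Phi2 \<epsilon> z"
proof -
  have "cnj (- z) - complex_of_real (a0 \<epsilon>) = - (cnj z + complex_of_real (a0 \<epsilon>))" by simp
  then show ?thesis unfolding Phi1_def Phi2_def by (simp only: divide_minus_right) simp
qed

lemma Phi2_uminus: "Phi2 \<epsilon> (- z) = - Phi1 \<epsilon> z"
proof -
  have "cnj (- z) + complex_of_real (a0 \<epsilon>) = - (cnj z - complex_of_real (a0 \<epsilon>))" by simp
  then show ?thesis unfolding Phi1_def Phi2_def by (simp only: divide_minus_right) simp
qed

lemma funpow_Phi12_uminus: "((Phi1 \<epsilon> \<circ> Phi2 \<epsilon>) ^^ l) (- z) = - ((Phi2 \<epsilon> \<circ> Phi1 \<epsilon>) ^^ l) z"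
  and funpow_Phi21_uminus: "((Phi2 \<epsilon> \<circ> Phi1 \<epsilon>) ^^ l) (- z) = - ((Phi1 \<epsilon> \<circ> Phi2 \<epsilon>) ^^ l) z"
  by (induction l) (auto simp: Phi1_uminus Phi2_uminus)

lemma Lg_uminus: "Lg (- y) (- p) = Lg y p"
proof -
  have "- p - - y = - (p - y)" by simp
  then show ?thesis by (simp only: Lg_def norm_minus_cancel)
qed

lemma Gfun_uminus:
  assumes "0 < \<epsilon>"
  shows "Gfun \<epsilon> k1 k2 x y = Gfun \<epsilon> k2 k1 (- x) (- y)"
  unfolding Gfun_def Let_def uminus_in_closure_Bone_iff uminus_in_closure_Btwo_iff uminus_in_Bone_iff
    uminus_in_Btwo_iff uminus_in_Bzero_iff funpow_Phi12_uminus funpow_Phi21_uminus Phi1_uminus Phi2_uminus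
    Lg_uminus mult.commute[of "contrast k2" "contrast k1"]
  using regions_disjoint(1-4,7,8,10-12)[OF assms] by (auto simp: algebra_simps)

lemma holo_grad_on_Gfun_uminus:
  assumes "0 < \<epsilon>" "holo_grad_on U (\<lambda>x. Gfun \<epsilon> k2 k1 x (- y) - a * ln (cmod (x + y)))"
  shows "holo_grad_on (uminus ` U) (\<lambda>x. Gfun \<epsilon> k1 k2 x y - a * ln (cmod (x - y)))"
  using holo_grad_on_uminus[OF assms(2)]
  by (rule holo_grad_on_cong) (simp add: Gfun_uminus[OF assms(1), of k1 k2 _ y] norm_minus_commute)

section \<open>Identities between the contrasts\<close>

lemma abs_contrast_less_1: "0 < k \<Longrightarrow> \<bar>contrast k\<bar> < 1"
  by (auto simp: contrast_def abs_less_iff divide_less_eq less_divide_eq)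

lemma abs_contrast_mult_less_1:
  assumes "0 < k1" "0 < k2"
  shows "\<bar>contrast k1 * contrast k2\<bar> < 1"
proof -
  have "\<bar>contrast k1\<bar> * \<bar>contrast k2\<bar> < 1 * 1"
    using abs_contrast_less_1[OF assms(1)] abs_contrast_less_1[OF assms(2)] by (intro mult_strict_mono') auto
  then show ?thesis by (simp add: abs_mult)
qed

lemma contrast_one_minus: "0 < k \<Longrightarrow> 2 / (k + 1) = 1 - contrast k"
  and contrast_one_plus: "0 < k \<Longrightarrow> k * (2 / (k + 1)) = 1 + contrast k"
  by (simp_all add: contrast_def field_simps)

lemma source_in_Bzero_identities:
  assumes k: "0 < k"
  shows "a + contrast k * \<beta> * b - \<beta> * b - contrast k * a = 2 / (k + 1) * (a - \<beta> * b)"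
    and "a - contrast k * \<beta> * b - \<beta> * b + contrast k * a = k * (2 / (k + 1) * (a - \<beta> * b))"
proof -
  show "a + contrast k * \<beta> * b - \<beta> * b - contrast k * a = 2 / (k + 1) * (a - \<beta> * b)"
    unfolding contrast_one_minus[OF k] by (simp add: algebra_simps)
  show "a - contrast k * \<beta> * b - \<beta> * b + contrast k * a = k * (2 / (k + 1) * (a - \<beta> * b))"
    unfolding mult.assoc[symmetric] contrast_one_plus[OF k] by (simp add: algebra_simps)
qed

lemma source_in_Bone_identities:
  assumes k: "0 < k"
  shows "2 / (k + 1) * (l + contrast k * \<beta> * b - \<beta> * b)
      = 1 / k * (l + contrast k * l) - 4 * \<beta> / (k + 1)\<^sup>2 * b"
    and "2 / (k + 1) * (l + contrast k * \<beta> * - b - \<beta> * b)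
      = k * (1 / k * (l + contrast k * - l) - 4 * \<beta> / (k + 1)\<^sup>2 * b)"
proof -
  define u where "u = 2 / (k + 1)"
  have \<alpha>: "contrast k = 1 - u" and ku: "k * u = 2 - u"
    using contrast_one_minus[OF k] contrast_one_plus[OF k] by (simp_all add: u_def)
  have sq: "4 * \<beta> / (k + 1)\<^sup>2 = \<beta> * u * u" by (simp add: u_def power2_eq_square)
  have l1: "1 / k * (l + contrast k * l) = u * l"
  proof -
    have "l + contrast k * l = (k * u) * l" unfolding ku \<alpha> by (simp add: algebra_simps)
    then show ?thesis using k by simp
  qed
  have l2: "l + contrast k * - l = u * l" unfolding \<alpha> by (simp add: algebra_simps)
  have l3: "k * (\<beta> * u * u * b) = \<beta> * u * (2 - u) * b"
    unfolding ku[symmetric] by (simp add: mult_ac)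
  have "2 / (k + 1) * (l + contrast k * \<beta> * b - \<beta> * b) = u * l - \<beta> * u * u * b"
    unfolding u_def[symmetric] \<alpha> by (simp add: algebra_simps)
  then show "2 / (k + 1) * (l + contrast k * \<beta> * b - \<beta> * b)
      = 1 / k * (l + contrast k * l) - 4 * \<beta> / (k + 1)\<^sup>2 * b"
    unfolding sq l1 .
  have "2 / (k + 1) * (l + contrast k * \<beta> * - b - \<beta> * b) = u * l - \<beta> * u * (2 - u) * b"
    unfolding u_def[symmetric] \<alpha> by (simp add: algebra_simps)
  then show "2 / (k + 1) * (l + contrast k * \<beta> * - b - \<beta> * b)
      = k * (1 / k * (l + contrast k * - l) - 4 * \<beta> / (k + 1)\<^sup>2 * b)"
    unfolding sq l2 right_diff_distrib l3 using k by simp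
qed

lemma source_in_Btwo_identities:
  assumes k: "0 < k"
  shows "2 / (k' + 1) * (a - contrast k * a) = 4 / ((k + 1) * (k' + 1)) * a"
    and "2 / (k' + 1) * (a - contrast k * - a) = k * (4 / ((k + 1) * (k' + 1)) * a)"
proof -
  have "a - contrast k * a = 2 / (k + 1) * a"
    unfolding contrast_one_minus[OF k] by (simp add: algebra_simps)
  moreover have "a - contrast k * - a = k * (2 / (k + 1)) * a"
    unfolding contrast_one_plus[OF k] by (simp add: algebra_simps)
  ultimately show "2 / (k' + 1) * (a - contrast k * a) = 4 / ((k + 1) * (k' + 1)) * a"
    and "2 / (k' + 1) * (a - contrast k * - a) = k * (4 / ((k + 1) * (k' + 1)) * a)"
    by (simp_all add: mult_ac)
qed

context
  fixes \<epsilon> k1 k2 :: real and y :: complex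
  assumes \<epsilon>: "0 < \<epsilon>" and k1: "0 < k1" and k2: "0 < k2"
begin

lemma holo_grad_Gfun_Bzero_Bone:
  assumes y: "y \<in> Bzero \<epsilon>"
  shows "holo_grad_on (Bone \<epsilon>) (\<lambda>x. Gfun \<epsilon> k1 k2 x y)"
proof -
  let ?q = "contrast k1 * contrast k2"
  have q: "\<bar>?q\<bar> < 1" by (rule abs_contrast_mult_less_1[OF k1 k2])
  have "y \<notin> Bone \<epsilon>" using y regions_disjoint(11)[OF \<epsilon>] by blast
  then have A: "holo_grad_series (Bone \<epsilon>) ?q (L12 \<epsilon> y)"
    using y by (intro holo_grad_series_L12[OF \<epsilon> q _ open_Bone Bone_subset_compl_cball[OF \<epsilon>]]) (auto simp: mem_Bzero)
  have B: "holo_grad_series (Bone \<epsilon>) ?q (\<lambda>l x. L21 \<epsilon> y l (Phi2 \<epsilon> x))"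
    using y by (intro holo_grad_series_L21_Phi2[OF \<epsilon> q _ open_Bone Bone_subset_compl_cball[OF \<epsilon>]]) (auto simp: mem_Bzero)
  have "holo_grad_on (Bone \<epsilon>) (\<lambda>x. 2 / (k1 + 1) * (pow_series ?q (L12 \<epsilon> y) x
      - contrast k2 * pow_series ?q (\<lambda>l x. L21 \<epsilon> y l (Phi2 \<epsilon> x)) x))"
    by (intro holo_grad_on_cmult holo_grad_on_diff holo_grad_on_pow_series A B)
  then show ?thesis
  proof (rule holo_grad_on_cong)
    fix x assume x: "x \<in> Bone \<epsilon>"
    show "2 / (k1 + 1) * (pow_series ?q (L12 \<epsilon> y) x
        - contrast k2 * pow_series ?q (\<lambda>l x. L21 \<epsilon> y l (Phi2 \<epsilon> x)) x) = Gfun \<epsilon> k1 k2 x y"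
      using Gfun_Bzero_Bone[OF \<epsilon> y regions_disjoint(7)[OF \<epsilon> x]
          holo_grad_series_summable[OF A x] holo_grad_series_summable[OF B x]] ..
  qed
qed

lemma holo_grad_Gfun_Bzero_Bzero:
  assumes y: "y \<in> Bzero \<epsilon>"
  shows "holo_grad_on (Bzero \<epsilon>) (\<lambda>x. Gfun \<epsilon> k1 k2 x y - ln (cmod (x - y)))"
proof -
  let ?q = "contrast k1 * contrast k2"
  let ?A1 = "\<lambda>l. L12 \<epsilon> y (Suc l)" and ?B1 = "\<lambda>l. L21 \<epsilon> y (Suc l)"
  let ?Bh = "\<lambda>l x. L21 \<epsilon> y l (Phi2 \<epsilon> x)" and ?Ah = "\<lambda>l x. L12 \<epsilon> y l (Phi1 \<epsilon> x)"
  have q: "\<bar>?q\<bar> < 1" by (rule abs_contrast_mult_less_1[OF k1 k2])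
  have y1: "1 < cmod (y - cen1 \<epsilon>)" and y2: "1 < cmod (y - cen2 \<epsilon>)" using y by (auto simp: mem_Bzero)
  have "y \<notin> Bone \<epsilon>" using y regions_disjoint(11)[OF \<epsilon>] by blast
  then have Phi1_ne: "Phi1 \<epsilon> x \<noteq> y" if "x \<in> Bzero \<epsilon>" for x
    using that Phi1_in_Bone[of x \<epsilon>] by (auto simp: mem_Bzero)
  have "cen1 \<epsilon> \<notin> Bzero \<epsilon>" by (simp add: mem_Bzero)
  note A1 = holo_grad_series_L12_Suc[OF \<epsilon> q y1 open_Bzero Bzero_subset_compl_cball(2)]
    and B1 = holo_grad_series_L21_Suc[OF \<epsilon> q y2 open_Bzero Bzero_subset_dom21[OF \<epsilon>]]
    and Bh = holo_grad_series_L21_Phi2[OF \<epsilon> q y2 open_Bzero Bzero_subset_compl_cball(2)]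
    and Ah = holo_grad_series_L12_Phi1[OF \<epsilon> q y1 open_Bzero \<open>cen1 \<epsilon> \<notin> Bzero \<epsilon>\<close>
        psi1_image_Bzero[OF \<epsilon>] Phi1_ne]
  have "holo_grad_on (Bzero \<epsilon>) (\<lambda>x. ?q * pow_series ?q ?A1 x + ?q * pow_series ?q ?B1 x
      - contrast k2 * pow_series ?q ?Bh x - contrast k1 * pow_series ?q ?Ah x)"
    by (intro holo_grad_on_cmult holo_grad_on_add holo_grad_on_diff holo_grad_on_pow_series A1 B1 Bh Ah)
  then show ?thesis
  proof (rule holo_grad_on_cong)
    fix x assume x: "x \<in> Bzero \<epsilon>"
    show "?q * pow_series ?q ?A1 x + ?q * pow_series ?q ?B1 x - contrast k2 * pow_series ?q ?Bh x
        - contrast k1 * pow_series ?q ?Ah x = Gfun \<epsilon> k1 k2 x y - ln (cmod (x - y))"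
      using Gfun_Bzero_Bzero[OF \<epsilon> y x holo_grad_series_summable[OF A1 x] holo_grad_series_summable[OF B1 x]
          holo_grad_series_summable[OF Bh x] holo_grad_series_summable[OF Ah x]]
      by (simp add: Lg_def)
  qed
qed

lemma holo_grad_Gfun_Bone_Bzero:
  assumes y: "y \<in> Bone \<epsilon>"
  shows "holo_grad_on (Bzero \<epsilon>) (\<lambda>x. Gfun \<epsilon> k1 k2 x y)"
proof -
  let ?q = "contrast k1 * contrast k2"
  have q: "\<bar>?q\<bar> < 1" by (rule abs_contrast_mult_less_1[OF k1 k2])
  have y2: "1 < cmod (y - cen2 \<epsilon>)" using Bone_outside_cball_cen2[OF \<epsilon> y] .
  have "y \<notin> Bzero \<epsilon>" using y regions_disjoint(11)[OF \<epsilon>] by blast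
  note B = holo_grad_series_L21[OF \<epsilon> q y2 open_Bzero Bzero_subset_dom21[OF \<epsilon>] this]
    and Bh = holo_grad_series_L21_Phi2[OF \<epsilon> q y2 open_Bzero Bzero_subset_compl_cball(2)]
  have "holo_grad_on (Bzero \<epsilon>) (\<lambda>x. 2 / (k1 + 1) * (pow_series ?q (L21 \<epsilon> y) x
      - contrast k2 * pow_series ?q (\<lambda>l x. L21 \<epsilon> y l (Phi2 \<epsilon> x)) x))"
    by (intro holo_grad_on_cmult holo_grad_on_diff holo_grad_on_pow_series B Bh)
  then show ?thesis
  proof (rule holo_grad_on_cong)
    fix x assume x: "x \<in> Bzero \<epsilon>"
    show "2 / (k1 + 1) * (pow_series ?q (L21 \<epsilon> y) x
        - contrast k2 * pow_series ?q (\<lambda>l x. L21 \<epsilon> y l (Phi2 \<epsilon> x)) x) = Gfun \<epsilon> k1 k2 x y"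
      using Gfun_Bone_Bzero[OF \<epsilon> y x holo_grad_series_summable[OF B x] holo_grad_series_summable[OF Bh x]] ..
  qed
qed

lemma holo_grad_Gfun_Bone_Btwo:
  assumes y: "y \<in> Bone \<epsilon>"
  shows "holo_grad_on (Btwo \<epsilon>) (\<lambda>x. Gfun \<epsilon> k1 k2 x y)"
proof -
  let ?q = "contrast k1 * contrast k2"
  have q: "\<bar>?q\<bar> < 1" by (rule abs_contrast_mult_less_1[OF k1 k2])
  have "y \<notin> Btwo \<epsilon>" using y regions_disjoint(9)[OF \<epsilon>] by blast
  note B = holo_grad_series_L21[OF \<epsilon> q Bone_outside_cball_cen2[OF \<epsilon> y] open_Btwo Btwo_subset_dom21[OF \<epsilon>] this]
  have "holo_grad_on (Btwo \<epsilon>) (\<lambda>x. 4 / ((k1 + 1) * (k2 + 1)) * pow_series ?q (L21 \<epsilon> y) x)"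
    by (intro holo_grad_on_cmult holo_grad_on_pow_series B)
  then show ?thesis
    by (rule holo_grad_on_cong) (simp add: Gfun_Bone_Btwo[OF \<epsilon> y regions_disjoint(8)[OF \<epsilon>]])
qed

lemma holo_grad_Gfun_Bone_Bone:
  assumes y: "y \<in> Bone \<epsilon>"
  shows "holo_grad_on (Bone \<epsilon> - {cen1 \<epsilon>}) (\<lambda>x. Gfun \<epsilon> k1 k2 x y - 1 / k1 * ln (cmod (x - y)))"
proof -
  let ?q = "contrast k1 * contrast k2" and ?U = "Bone \<epsilon> - {cen1 \<epsilon>}"
  have q: "\<bar>?q\<bar> < 1" by (rule abs_contrast_mult_less_1[OF k1 k2])
  have U: "open ?U" "?U \<subseteq> - cball (cen2 \<epsilon>) 1" using Bone_subset_compl_cball[OF \<epsilon>] by (auto simp: open_Bone)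
  have "Phi1 \<epsilon> x \<noteq> y" if "x \<in> ?U" for x
    using that Phi1_notin_closure_Bone[of x \<epsilon>] regions_disjoint(7)[OF \<epsilon> y] by (auto simp: Bone_def dist_cmod)
  then have P: "holo_grad_on ?U (\<lambda>x. Lg y (Phi1 \<epsilon> x))"
    using U(1) by (intro holo_grad_on_Lg_Phi1) auto
  note Bh = holo_grad_series_L21_Phi2[OF \<epsilon> q Bone_outside_cball_cen2[OF \<epsilon> y] U]
  have "holo_grad_on ?U (\<lambda>x. 1 / k1 * contrast k1 * Lg y (Phi1 \<epsilon> x)
      - 4 * contrast k2 / (k1 + 1)\<^sup>2 * pow_series ?q (\<lambda>l x. L21 \<epsilon> y l (Phi2 \<epsilon> x)) x)"
    by (intro holo_grad_on_cmult holo_grad_on_diff holo_grad_on_pow_series P Bh)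
  then show ?thesis
  proof (rule holo_grad_on_cong)
    fix x assume "x \<in> ?U"
    then have "x \<in> closure (Bone \<epsilon>)" using regions_disjoint(7)[OF \<epsilon>] by blast
    then show "1 / k1 * contrast k1 * Lg y (Phi1 \<epsilon> x)
        - 4 * contrast k2 / (k1 + 1)\<^sup>2 * pow_series ?q (\<lambda>l x. L21 \<epsilon> y l (Phi2 \<epsilon> x)) x
        = Gfun \<epsilon> k1 k2 x y - 1 / k1 * ln (cmod (x - y))"
      by (simp add: Gfun_Bone_Bone[OF \<epsilon> y] Lg_def algebra_simps)
  qed
qed

lemma transmission_data_Gfun_Bzero:
  assumes y: "y \<in> Bzero \<epsilon>" and x0: "cmod (x0 - cen1 \<epsilon>) = 1"
  shows "transmission_data \<epsilon> (cen1 \<epsilon>) x0 (\<lambda>x. Gfun \<epsilon> k1 k2 x y) k1"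
proof -
  let ?q = "contrast k1 * contrast k2" and ?N = "nbhd1 \<epsilon> y"
  let ?A = "L12 \<epsilon> y" and ?B1 = "\<lambda>l. L21 \<epsilon> y (Suc l)"
  let ?Bh = "\<lambda>l x. L21 \<epsilon> y l (Phi2 \<epsilon> x)" and ?Ah = "\<lambda>l x. L12 \<epsilon> y l (Phi1 \<epsilon> x)"
  have q: "\<bar>?q\<bar> < 1" by (rule abs_contrast_mult_less_1[OF k1 k2])
  have y1: "1 < cmod (y - cen1 \<epsilon>)" and y2: "1 < cmod (y - cen2 \<epsilon>)" using y by (auto simp: mem_Bzero)
  note A = holo_grad_series_L12_nbhd1[OF \<epsilon> q y1] and B = holo_grad_series_L21_nbhd1[OF \<epsilon> q y2]
  have x0N: "x0 \<in> ?N" using sphere_in_nbhd1[OF \<epsilon> x0] y1 by simp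
  note D = A[THEN differentiable_pow_series, OF x0N] B[THEN differentiable_pow_series, OF x0N]
  note RA = L12_series_reflect[OF \<epsilon> q y1 x0]
  note RB = L21_series_reflect[OF \<epsilon> q y2 x0, OF less_imp_neq[OF y1, symmetric]]
  define F0 where "F0 = (\<lambda>x. pow_series ?q ?A x + ?q * pow_series ?q ?B1 x
    - contrast k2 * pow_series ?q ?Bh x - contrast k1 * pow_series ?q ?Ah x)"
  define F1 where "F1 = (\<lambda>x. 2 / (k1 + 1) * (pow_series ?q ?A x - contrast k2 * pow_series ?q ?Bh x))"
  show ?thesis
  proof (rule transmission_dataI[OF x0 open_nbhd1 x0N])
    show "holo_grad_on ?N F0" "holo_grad_on ?N F1" unfolding F0_def F1_def
      by (intro holo_grad_on_cmult holo_grad_on_add holo_grad_on_diff holo_grad_on_pow_series A B)+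
    show "Gfun \<epsilon> k1 k2 x y = F0 x" if "x \<in> ?N" "x \<in> Bzero \<epsilon>" for x
      using Gfun_Bzero_Bzero[OF \<epsilon> y that(2)] pow_series_split_head[of ?q ?A x]
        holo_grad_series_summable[OF A(2) that(1)] holo_grad_series_summable[OF B(1) that(1)]
        holo_grad_series_summable[OF B(2) that(1)] holo_grad_series_summable[OF A(3) that(1)]
      by (simp add: F0_def L12_0)
    show "Gfun \<epsilon> k1 k2 x y = F1 x" if "x \<in> ?N" "x \<in> ball (cen1 \<epsilon>) 1" for x
      using that regions_disjoint(7)[OF \<epsilon>, of x] Gfun_Bzero_Bone[OF \<epsilon> y]
        holo_grad_series_summable[OF A(1) that(1)] holo_grad_series_summable[OF B(2) that(1)]
      by (simp add: F1_def Bone_def)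
    let ?n = "x0 - cen1 \<epsilon>"
    show "F0 x0 = F1 x0"
      unfolding F0_def F1_def RA(1) RB(1) by (rule source_in_Bzero_identities(1)[OF k1])
    have "pd ?n F0 x0 = pd ?n (pow_series ?q ?A) x0 - ?q * pd ?n (pow_series ?q ?Bh) x0
        - contrast k2 * pd ?n (pow_series ?q ?Bh) x0 + contrast k1 * pd ?n (pow_series ?q ?A) x0"
      by (simp only: F0_def pd_add pd_diff pd_cmult D differentiable_rules RA(2) RB(2))
    also have "\<dots> = k1 * pd ?n F1 x0"
      unfolding source_in_Bzero_identities(2)[OF k1]
      by (simp only: F1_def pd_diff pd_cmult D differentiable_rules)
    finally show "pd ?n F0 x0 = k1 * pd ?n F1 x0" .
  qed
qed

lemma transmission_data_Gfun_Bone: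
  assumes y: "y \<in> Bone \<epsilon>" and x0: "cmod (x0 - cen1 \<epsilon>) = 1"
  shows "transmission_data \<epsilon> (cen1 \<epsilon>) x0 (\<lambda>x. Gfun \<epsilon> k1 k2 x y) k1"
proof -
  let ?q = "contrast k1 * contrast k2" and ?N = "nbhd1 \<epsilon> y" and ?n = "x0 - cen1 \<epsilon>"
  let ?B1 = "\<lambda>l. L21 \<epsilon> y (Suc l)" and ?Bh = "\<lambda>l x. L21 \<epsilon> y l (Phi2 \<epsilon> x)"
  have q: "\<bar>?q\<bar> < 1" by (rule abs_contrast_mult_less_1[OF k1 k2])
  have y1: "cmod (y - cen1 \<epsilon>) \<noteq> 1" using y by (simp add: Bone_def dist_cmod)
  note y2 = Bone_outside_cball_cen2[OF \<epsilon> y]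
  note B = holo_grad_series_L21_nbhd1[OF \<epsilon> q y2]
  have x0N: "x0 \<in> ?N" using sphere_in_nbhd1[OF \<epsilon> x0 y1] .
  note L = holo_grad_on_Lg[OF open_nbhd1 notin_nbhd1(2)]
    and LP = holo_grad_on_Lg_Phi1[OF open_nbhd1 notin_nbhd1(1) Phi1_nbhd1]
  note D = holo_grad_on_imp_differentiable[OF L x0N] holo_grad_on_imp_differentiable[OF LP x0N]
    B[THEN differentiable_pow_series, OF x0N]
  note RB = L21_series_reflect[OF \<epsilon> q y2 x0 y1]
  have RL: "Lg y (Phi1 \<epsilon> x0) = Lg y x0" "pd ?n (\<lambda>x. Lg y (Phi1 \<epsilon> x)) x0 = - pd ?n (Lg y) x0"
    using Phi1_sphere[OF x0] pd_comp_Phi1_sphere[OF D(1) x0] by simp_all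
  define F0 where
    "F0 = (\<lambda>x. 2 / (k1 + 1) * (Lg y x + ?q * pow_series ?q ?B1 x - contrast k2 * pow_series ?q ?Bh x))"
  define F1 where "F1 = (\<lambda>x. 1 / k1 * (Lg y x + contrast k1 * Lg y (Phi1 \<epsilon> x))
    - 4 * contrast k2 / (k1 + 1)\<^sup>2 * pow_series ?q ?Bh x)"
  show ?thesis
  proof (rule transmission_dataI[OF x0 open_nbhd1 x0N])
    show "holo_grad_on ?N F0" "holo_grad_on ?N F1" unfolding F0_def F1_def
      by (intro holo_grad_on_cmult holo_grad_on_add holo_grad_on_diff holo_grad_on_pow_series L LP B)+
    show "Gfun \<epsilon> k1 k2 x y = F0 x" if "x \<in> ?N" "x \<in> Bzero \<epsilon>" for x
      using holo_grad_series_summable[OF B(1) that(1)] holo_grad_series_summable[OF B(2) that(1)]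
        Gfun_Bone_Bzero[OF \<epsilon> y that(2) summable_pow_Suc[of ?q "L21 \<epsilon> y" x]]
        pow_series_split_head[of ?q "L21 \<epsilon> y" x]
      by (simp add: F0_def L21_0)
    show "Gfun \<epsilon> k1 k2 x y = F1 x" if "x \<in> ?N" "x \<in> ball (cen1 \<epsilon>) 1" for x
      using that regions_disjoint(7)[OF \<epsilon>, of x] Gfun_Bone_Bone[OF \<epsilon> y]
      by (simp add: F1_def Bone_def)
    show "F0 x0 = F1 x0"
      unfolding F0_def F1_def RB(1) RL(1) by (rule source_in_Bone_identities(1)[OF k1])
    have "pd ?n F0 x0 = 2 / (k1 + 1) * (pd ?n (Lg y) x0 + ?q * - pd ?n (pow_series ?q ?Bh) x0
        - contrast k2 * pd ?n (pow_series ?q ?Bh) x0)"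
      by (simp only: F0_def pd_add pd_diff pd_cmult D differentiable_rules RB(2))
    also have "\<dots> = k1 * pd ?n F1 x0"
      unfolding source_in_Bone_identities(2)[OF k1]
      by (simp only: F1_def pd_add pd_diff pd_cmult D differentiable_rules RL(2))
    finally show "pd ?n F0 x0 = k1 * pd ?n F1 x0" .
  qed
qed

lemma transmission_data_Gfun_Btwo:
  assumes y: "y \<in> Btwo \<epsilon>" and x0: "cmod (x0 - cen1 \<epsilon>) = 1"
  shows "transmission_data \<epsilon> (cen1 \<epsilon>) x0 (\<lambda>x. Gfun \<epsilon> k1 k2 x y) k1"
proof -
  let ?q = "contrast k1 * contrast k2" and ?N = "nbhd1 \<epsilon> y" and ?n = "x0 - cen1 \<epsilon>"
  let ?A = "L12 \<epsilon> y" and ?Ah = "\<lambda>l x. L12 \<epsilon> y l (Phi1 \<epsilon> x)"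
  have q: "\<bar>?q\<bar> < 1" by (rule abs_contrast_mult_less_1[OF k1 k2])
  note y1 = Btwo_outside_cball_cen1[OF \<epsilon> y]
  note A = holo_grad_series_L12_nbhd1[OF \<epsilon> q y1]
  have x0N: "x0 \<in> ?N" using sphere_in_nbhd1[OF \<epsilon> x0] y1 by simp
  note D = A[THEN differentiable_pow_series, OF x0N]
  note RA = L12_series_reflect[OF \<epsilon> q y1 x0]
  define F0 where "F0 = (\<lambda>x. 2 / (k2 + 1) * (pow_series ?q ?A x - contrast k1 * pow_series ?q ?Ah x))"
  define F1 where "F1 = (\<lambda>x. 4 / ((k1 + 1) * (k2 + 1)) * pow_series ?q ?A x)"
  show ?thesis
  proof (rule transmission_dataI[OF x0 open_nbhd1 x0N])
    show "holo_grad_on ?N F0" "holo_grad_on ?N F1" unfolding F0_def F1_def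
      by (intro holo_grad_on_cmult holo_grad_on_diff holo_grad_on_pow_series A)+
    show "Gfun \<epsilon> k1 k2 x y = F0 x" if "x \<in> ?N" "x \<in> Bzero \<epsilon>" for x
      using Gfun_Btwo_Bzero[OF \<epsilon> y that(2) holo_grad_series_summable[OF A(1) that(1)]
          holo_grad_series_summable[OF A(3) that(1)]]
      by (simp add: F0_def)
    show "Gfun \<epsilon> k1 k2 x y = F1 x" if "x \<in> ?N" "x \<in> ball (cen1 \<epsilon>) 1" for x
      using that regions_disjoint(7)[OF \<epsilon>, of x] Gfun_Btwo_Bone[OF \<epsilon> y]
      by (simp add: F1_def Bone_def)
    show "F0 x0 = F1 x0"
      unfolding F0_def F1_def RA(1) by (rule source_in_Btwo_identities(1)[OF k1])
    have "pd ?n F0 x0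
        = 2 / (k2 + 1) * (pd ?n (pow_series ?q ?A) x0 - contrast k1 * - pd ?n (pow_series ?q ?A) x0)"
      by (simp only: F0_def pd_diff pd_cmult D differentiable_rules RA(2))
    also have "\<dots> = k1 * pd ?n F1 x0"
      unfolding source_in_Btwo_identities(2)[OF k1] by (simp only: F1_def pd_cmult D differentiable_rules)
    finally show "pd ?n F0 x0 = k1 * pd ?n F1 x0" .
  qed
qed

end

lemma harmonic_Gfun_Bzero:
  assumes "0 < \<epsilon>" "0 < k1" "0 < k2" "y \<in> Bzero \<epsilon>"
  shows "harmonic_on (Bone \<epsilon> \<union> Btwo \<epsilon>) (\<lambda>x. Gfun \<epsilon> k1 k2 x y)"
    and "harmonic_on (Bzero \<epsilon>) (\<lambda>x. Gfun \<epsilon> k1 k2 x y - ln (cmod (x - y)))"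
proof -
  have "- y \<in> Bzero \<epsilon>" using assms(4) by (simp add: uminus_in_Bzero_iff)
  from holo_grad_Gfun_Bzero_Bone[OF assms(1,3,2) this]
  have "holo_grad_on (Bone \<epsilon>) (\<lambda>x. Gfun \<epsilon> k2 k1 x (- y) - 0 * ln (cmod (x + y)))" by simp
  from holo_grad_on_Gfun_uminus[OF assms(1) this]
  have "holo_grad_on (Btwo \<epsilon>) (\<lambda>x. Gfun \<epsilon> k1 k2 x y)" by (simp add: uminus_image_Bone)
  then show "harmonic_on (Bone \<epsilon> \<union> Btwo \<epsilon>) (\<lambda>x. Gfun \<epsilon> k1 k2 x y)"
    using holo_grad_Gfun_Bzero_Bone[OF assms] by (intro harmonic_on_Un holo_grad_on_imp_harmonic_on)
  show "harmonic_on (Bzero \<epsilon>) (\<lambda>x. Gfun \<epsilon> k1 k2 x y - ln (cmod (x - y)))"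
    by (intro holo_grad_on_imp_harmonic_on holo_grad_Gfun_Bzero_Bzero[OF assms])
qed

lemma harmonic_Gfun_Bone:
  assumes "0 < \<epsilon>" "0 < k1" "0 < k2" "y \<in> Bone \<epsilon>"
  shows "harmonic_on (Bzero \<epsilon> \<union> Btwo \<epsilon>) (\<lambda>x. Gfun \<epsilon> k1 k2 x y)"
    and "harmonic_on (Bone \<epsilon> - {cen1 \<epsilon>}) (\<lambda>x. Gfun \<epsilon> k1 k2 x y - 1 / k1 * ln (cmod (x - y)))"
  using holo_grad_Gfun_Bone_Bzero[OF assms] holo_grad_Gfun_Bone_Btwo[OF assms] holo_grad_Gfun_Bone_Bone[OF assms]
  by (auto intro: harmonic_on_Un holo_grad_on_imp_harmonic_on)

lemma harmonic_Gfun_Btwo: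
  assumes "0 < \<epsilon>" "0 < k1" "0 < k2" "y \<in> Btwo \<epsilon>"
  shows "harmonic_on (Bzero \<epsilon> \<union> Bone \<epsilon>) (\<lambda>x. Gfun \<epsilon> k1 k2 x y)"
    and "harmonic_on (Btwo \<epsilon> - {cen2 \<epsilon>}) (\<lambda>x. Gfun \<epsilon> k1 k2 x y - 1 / k2 * ln (cmod (x - y)))"
proof -
  have y: "- y \<in> Bone \<epsilon>" using assms(4) by (simp add: uminus_in_Bone_iff)
  have "holo_grad_on (Bzero \<epsilon>) (\<lambda>x. Gfun \<epsilon> k2 k1 x (- y) - 0 * ln (cmod (x + y)))"
    "holo_grad_on (Btwo \<epsilon>) (\<lambda>x. Gfun \<epsilon> k2 k1 x (- y) - 0 * ln (cmod (x + y)))"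
    using holo_grad_Gfun_Bone_Bzero[OF assms(1,3,2) y] holo_grad_Gfun_Bone_Btwo[OF assms(1,3,2) y] by simp_all
  from this[THEN holo_grad_on_Gfun_uminus[OF assms(1)]]
  have "holo_grad_on (Bzero \<epsilon>) (\<lambda>x. Gfun \<epsilon> k1 k2 x y)" "holo_grad_on (Bone \<epsilon>) (\<lambda>x. Gfun \<epsilon> k1 k2 x y)"
    by (simp_all add: uminus_image_Bzero uminus_image_Btwo)
  then show "harmonic_on (Bzero \<epsilon> \<union> Bone \<epsilon>) (\<lambda>x. Gfun \<epsilon> k1 k2 x y)"
    by (intro harmonic_on_Un holo_grad_on_imp_harmonic_on)
  have "holo_grad_on (Bone \<epsilon> - {cen1 \<epsilon>}) (\<lambda>x. Gfun \<epsilon> k2 k1 x (- y) - 1 / k2 * ln (cmod (x + y)))"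
    using holo_grad_Gfun_Bone_Bone[OF assms(1,3,2) y] by simp
  from holo_grad_on_Gfun_uminus[OF assms(1) this]
  show "harmonic_on (Btwo \<epsilon> - {cen2 \<epsilon>}) (\<lambda>x. Gfun \<epsilon> k1 k2 x y - 1 / k2 * ln (cmod (x - y)))"
    by (simp add: uminus_image_Bone_punctured holo_grad_on_imp_harmonic_on)
qed

lemma transmission_data_Gfun:
  assumes "0 < \<epsilon>" "0 < k1" "0 < k2" "y \<in> Bzero \<epsilon> \<union> Bone \<epsilon> \<union> Btwo \<epsilon>" "x0 \<in> sphere (cen1 \<epsilon>) 1"
  shows "transmission_data \<epsilon> (cen1 \<epsilon>) x0 (\<lambda>x. Gfun \<epsilon> k1 k2 x y) k1"
proof -
  have "cmod (x0 - cen1 \<epsilon>) = 1" using assms(5) by (simp add: dist_cmod)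
  then show ?thesis
    using assms(4) transmission_data_Gfun_Bzero[OF assms(1-3)] transmission_data_Gfun_Bone[OF assms(1-3)]
      transmission_data_Gfun_Btwo[OF assms(1-3)]
    by blast
qed

lemma transmission_Gfun:
  assumes "0 < \<epsilon>" "0 < k1" "0 < k2" "y \<in> Bzero \<epsilon> \<union> Bone \<epsilon> \<union> Btwo \<epsilon>"
  shows "\<forall>x0\<in>sphere (cen1 \<epsilon>) 1. transmission \<epsilon> k1 k2 (cen1 \<epsilon>) x0 (\<lambda>x. Gfun \<epsilon> k1 k2 x y)"
    and "\<forall>x0\<in>sphere (cen2 \<epsilon>) 1. transmission \<epsilon> k1 k2 (cen2 \<epsilon>) x0 (\<lambda>x. Gfun \<epsilon> k1 k2 x y)"
proof -
  have a1: "acoef \<epsilon> k1 k2 x = k1" if "x \<in> ball (cen1 \<epsilon>) 1" for x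
    using that by (simp add: acoef_def Bone_def)
  have a2: "acoef \<epsilon> k1 k2 x = k2" if "x \<in> ball (cen2 \<epsilon>) 1" for x
    using that regions_disjoint(10)[OF assms(1), of x] by (simp add: acoef_def Btwo_def)
  show "\<forall>x0\<in>sphere (cen1 \<epsilon>) 1. transmission \<epsilon> k1 k2 (cen1 \<epsilon>) x0 (\<lambda>x. Gfun \<epsilon> k1 k2 x y)"
    using transmission_data_imp_transmission[OF transmission_data_Gfun[OF assms] a1] by blast
  show "\<forall>x0\<in>sphere (cen2 \<epsilon>) 1. transmission \<epsilon> k1 k2 (cen2 \<epsilon>) x0 (\<lambda>x. Gfun \<epsilon> k1 k2 x y)"
  proof
    fix x0 assume "x0 \<in> sphere (cen2 \<epsilon>) 1"
    then have "- x0 \<in> sphere (cen1 \<epsilon>) 1" by (simp add: cen2_eq dist_uminus_right)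
    moreover have "- y \<in> Bzero \<epsilon> \<union> Bone \<epsilon> \<union> Btwo \<epsilon>"
      using assms(4) by (auto simp: uminus_in_Bzero_iff uminus_in_Bone_iff uminus_in_Btwo_iff)
    ultimately have "transmission_data \<epsilon> (cen1 \<epsilon>) (- x0) (\<lambda>x. Gfun \<epsilon> k2 k1 x (- y)) k2"
      using transmission_data_Gfun[OF assms(1,3,2)] by blast
    from transmission_data_uminus[OF this]
    have "transmission_data \<epsilon> (cen2 \<epsilon>) x0 (\<lambda>x. Gfun \<epsilon> k1 k2 x y) k2"
      by (simp add: cen2_eq Gfun_uminus[OF assms(1), of k1 k2 _ y])
    then show "transmission \<epsilon> k1 k2 (cen2 \<epsilon>) x0 (\<lambda>x. Gfun \<epsilon> k1 k2 x y)"
      by (rule transmission_data_imp_transmission) (rule a2)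
  qed
qed

theorem lemma2p1:
  fixes \<epsilon> k1 k2 :: real and y :: complex
  assumes "\<epsilon> > 0" and "k1 > 0" and "k2 > 0"
  shows "(y \<in> Bzero \<epsilon> \<longrightarrow>
           harmonic_on (Bone \<epsilon> \<union> Btwo \<epsilon>) (\<lambda>x. Gfun \<epsilon> k1 k2 x y) \<and>
           harmonic_on (Bzero \<epsilon>) (\<lambda>x. Gfun \<epsilon> k1 k2 x y - ln (cmod (x - y))))
     \<and> (y \<in> Bone \<epsilon> \<longrightarrow>
           harmonic_on (Bzero \<epsilon> \<union> Btwo \<epsilon>) (\<lambda>x. Gfun \<epsilon> k1 k2 x y) \<and>
           harmonic_on (Bone \<epsilon> - {cen1 \<epsilon>}) (\<lambda>x. Gfun \<epsilon> k1 k2 x y - 1 / k1 * ln (cmod (x - y))))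
     \<and> (y \<in> Btwo \<epsilon> \<longrightarrow>
           harmonic_on (Bzero \<epsilon> \<union> Bone \<epsilon>) (\<lambda>x. Gfun \<epsilon> k1 k2 x y) \<and>
           harmonic_on (Btwo \<epsilon> - {cen2 \<epsilon>}) (\<lambda>x. Gfun \<epsilon> k1 k2 x y - 1 / k2 * ln (cmod (x - y))))
     \<and> (y \<in> Bzero \<epsilon> \<union> Bone \<epsilon> \<union> Btwo \<epsilon> \<longrightarrow>
           (\<forall>x0\<in>sphere (cen1 \<epsilon>) 1. transmission \<epsilon> k1 k2 (cen1 \<epsilon>) x0 (\<lambda>x. Gfun \<epsilon> k1 k2 x y)) \<and>
           (\<forall>x0\<in>sphere (cen2 \<epsilon>) 1. transmission \<epsilon> k1 k2 (cen2 \<epsilon>) x0 (\<lambda>x. Gfun \<epsilon> k1 k2 x y)))"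
  using harmonic_Gfun_Bzero[OF assms] harmonic_Gfun_Bone[OF assms] harmonic_Gfun_Btwo[OF assms]
    transmission_Gfun[OF assms]
  by blast

end
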